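(* Let $\Lambda$ be a Legendrian knot in $(\mathbb{R}^3,dz-y\,dx)$ with generic Lagrangian projection, and let $\epsilon:(\mathcal{A}_\Lambda,\partial_\Lambda)\to(\mathbb{Z}_2,0)$ be an augmentation. Then \[ MC(z)-PC^\epsilon(z)=(z+1)R(z), \] where $R(z)=\sum_k\#\{\text{finite bars in }F^\bullet\mathrm{LCH}^\epsilon_k(\Lambda)\}\,z^k$.
   Context: $(\mathcal{A}_\Lambda,\partial_\Lambda)$ is the Chekanov–Eliashberg DGA over $\mathbb{Z}_2$ of $\Lambda$, generated by the Reeb chords (double points of the Lagrangian projection) $q_1,\dots,q_n$, with $\mathbb{Z}$-grading $|q_i|$. An augmentation is an algebra map $\epsilon:\mathcal{A}_\Lambda\to\mathbb{Z}_2$ vanishing on nonzero degrees with $\epsilon\circ\partial_\Lambda=0$; $\partial_1^\epsilon$ is the linearized differential (length-one part of $\phi^\epsilon\partial_\Lambda(\phi^\epsilon)^{-1}$, $\phi^\epsilon(q_i)=q_i+\epsilon(q_i)$) on the vector space $A_\Lambda$ with basis $q_1,\dots,q_n$, and $\mathrm{LCH}^\epsilon_k(\Lambda)=H_k(A_\Lambda,\partial^\epsilon_1)$. Morse–Chekanov polynomial: $MC(z)=\sum_k\#\{\text{Reeb chords of grading }k\}z^k$. Poincaré–Chekanov polynomial: $PC^\epsilon(z)=\sum_k\dim_{\mathbb{Z}_2}\mathrm{LCH}^\epsilon_k(\Lambda)z^k$. Each $q_i$ has height $h(q_i)=\int_{\gamma_i}(dz-y\,dx)>0$ over its Reeb chord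 $\gamma_i$; $\partial_1^\epsilon$ strictly decreases height. $F^\bullet\mathrm{LCH}^\epsilon_k(\Lambda)$ is the persistence module $t\mapsto H_k(A^t,\partial_1^\epsilon)$ with $A^t$ spanned by the $q_i$ with $h(q_i)\le t$ and transfer maps induced by inclusion; it decomposes uniquely as a direct sum of interval modules (its barcode), and a finite bar is a summand supported on a bounded interval. *)

theory Defs
  imports Complex_Main
begin

text \<open>Reeb chords are q_0,...,q_{n-1} (indices i < n); g i is the grading |q_i|,
  h i the height.  A word (monomial) is a list of chord indices; an element of the
  (noncommutative, unital, free) algebra over Z2 is a finite set of words
  (coefficient 1 exactly on the words in the set); the empty word is the unit.\<close>

definition xor_set :: "'a set \<Rightarrow> 'a set \<Rightarrow> 'a set" where
  "xor_set A B = (A - B) \<union> (B - A)"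

definition word_grade :: "(nat \<Rightarrow> int) \<Rightarrow> nat list \<Rightarrow> int" where
  "word_grade g w = sum_list (map g w)"

definition word_height :: "(nat \<Rightarrow> real) \<Rightarrow> nat list \<Rightarrow> real" where
  "word_height h w = sum_list (map h w)"

definition dword :: "(nat \<Rightarrow> nat list set) \<Rightarrow> nat list \<Rightarrow> nat list set" where
  "dword d w = {x. odd (card {(k, v). k < length w \<and> v \<in> d (w ! k) \<and>
                         take k w @ v @ drop (Suc k) w = x})}"

definition dpoly :: "(nat \<Rightarrow> nat list set) \<Rightarrow> nat list set \<Rightarrow> nat list set" where
  "dpoly d P = {x. odd (card {w \<in> P. x \<in> dword d w})}"

definition CE_dga :: "nat \<Rightarrow> (nat \<Rightarrow> int) \<Rightarrow> (nat \<Rightarrow> real) \<Rightarrow> (nat \<Rightarrow> nat list set) \<Rightarrow> bool" where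
  "CE_dga n g h d \<longleftrightarrow>
     (\<forall>i<n. h i > 0) \<and>
     (\<forall>i<n. finite (d i)) \<and>
     (\<forall>i<n. \<forall>w\<in>d i. set w \<subseteq> {..<n} \<and> word_grade g w = g i - 1 \<and> word_height h w < h i) \<and>
     (\<forall>i<n. dpoly d (d i) = {})"

text \<open>Augmentation eps : A -> Z2 (algebra map, determined by its values on generators):
  vanishes on generators of nonzero degree and satisfies eps o d = 0.\<close>
definition augmentation :: "nat \<Rightarrow> (nat \<Rightarrow> int) \<Rightarrow> (nat \<Rightarrow> nat list set) \<Rightarrow> (nat \<Rightarrow> bool) \<Rightarrow> bool" where
  "augmentation n g d eps \<longleftrightarrow>
     (\<forall>i<n. eps i \<longrightarrow> g i = 0) \<and>
     (\<forall>i<n. even (card {w \<in> d i. \<forall>j\<in>set w. eps j}))"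

text \<open>Linearized differential on generators: the length-one part of
  phi o d o phi^{-1}(q_i) = phi(d q_i), where phi(q_j) = q_j + eps(q_j).\<close>
definition lin_diff :: "(nat \<Rightarrow> nat list set) \<Rightarrow> (nat \<Rightarrow> bool) \<Rightarrow> nat \<Rightarrow> nat set" where
  "lin_diff d eps i = {j. odd (card {(w, k). w \<in> d i \<and> k < length w \<and> w ! k = j \<and>
                              (\<forall>m<length w. m \<noteq> k \<longrightarrow> eps (w ! m))})}"

text \<open>Vectors of A_Lambda are finite sets of generator indices (Z2 coefficients);
  linear extension of the linearized differential.\<close>
definition lin_D :: "(nat \<Rightarrow> nat list set) \<Rightarrow> (nat \<Rightarrow> bool) \<Rightarrow> nat set \<Rightarrow> nat set" where
  "lin_D d eps S = {j. odd (card {i \<in> S. j \<in> lin_diff d eps i})}"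

definition chains :: "nat \<Rightarrow> (nat \<Rightarrow> int) \<Rightarrow> (nat \<Rightarrow> bool) \<Rightarrow> int \<Rightarrow> nat set set" where
  "chains n g L k = {S. S \<subseteq> {i. i < n \<and> g i = k \<and> L i}}"

definition cycles where
  "cycles n g d eps L k = {S \<in> chains n g L k. lin_D d eps S = {}}"

definition boundaries where
  "boundaries n g d eps L k = lin_D d eps ` chains n g L (k + 1)"

definition homology :: "nat \<Rightarrow> (nat \<Rightarrow> int) \<Rightarrow> (nat \<Rightarrow> nat list set) \<Rightarrow> (nat \<Rightarrow> bool)
    \<Rightarrow> (nat \<Rightarrow> bool) \<Rightarrow> int \<Rightarrow> nat set set set" where
  "homology n g d eps L k =
     (\<lambda>z. (\<lambda>b. xor_set z b) ` boundaries n g d eps L k) ` cycles n g d eps L k"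

definition cadd :: "nat set set \<Rightarrow> nat set set \<Rightarrow> nat set set" where
  "cadd C1 C2 = {xor_set x y | x y. x \<in> C1 \<and> y \<in> C2}"

definition level :: "(nat \<Rightarrow> real) \<Rightarrow> real \<Rightarrow> nat \<Rightarrow> bool" where
  "level h t = (\<lambda>i. h i \<le> t)"

definition transfer where
  "transfer n g h d eps k t C =
     {xor_set x b | x b. x \<in> C \<and> b \<in> boundaries n g d eps (level h t) k}"

definition hom_dim where
  "hom_dim V = (THE m. \<exists>\<psi>. bij_betw \<psi> V {f :: nat \<Rightarrow> bool. \<forall>j. f j \<longrightarrow> j < m} \<and>
                      (\<forall>C1\<in>V. \<forall>C2\<in>V. \<psi> (cadd C1 C2) = (\<lambda>j. \<psi> C1 j \<noteq> \<psi> C2 j)))"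

definition real_interval :: "real set \<Rightarrow> bool" where
  "real_interval I \<longleftrightarrow> I \<noteq> {} \<and> (\<forall>a\<in>I. \<forall>b\<in>I. \<forall>x. a \<le> x \<and> x \<le> b \<longrightarrow> x \<in> I)"

text \<open>An isomorphism of persistence modules between t |-> H_k(A^t) and the direct sum of
  interval modules Z2_{I j}, j in J (J finite).\<close>
definition interval_decomposition where
  "interval_decomposition n g h d eps k J I \<phi> \<longleftrightarrow>
     finite J \<and> (\<forall>j\<in>J. real_interval (I j)) \<and>
     (\<forall>t. bij_betw (\<phi> t) (homology n g d eps (level h t) k)
                     {f. \<forall>j. f j \<longrightarrow> j \<in> J \<and> t \<in> I j}) \<and>
     (\<forall>t. \<forall>C1\<in>homology n g d eps (level h t) k. \<forall>C2\<in>homology n g d eps (level h t) k.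
          \<phi> t (cadd C1 C2) = (\<lambda>j. \<phi> t C1 j \<noteq> \<phi> t C2 j)) \<and>
     (\<forall>s t. s \<le> t \<longrightarrow> (\<forall>C\<in>homology n g d eps (level h s) k.
          \<phi> t (transfer n g h d eps k t C) = (\<lambda>j. \<phi> s C j \<and> t \<in> I j)))"

definition finite_bars :: "nat set \<Rightarrow> (nat \<Rightarrow> real set) \<Rightarrow> nat" where
  "finite_bars J I = card {j \<in> J. \<exists>a b. I j \<subseteq> {a..b}}"

definition MC_coeff :: "nat \<Rightarrow> (nat \<Rightarrow> int) \<Rightarrow> int \<Rightarrow> nat" where
  "MC_coeff n g k = card {i. i < n \<and> g i = k}"

definition PC_coeff where
  "PC_coeff n g d eps k = hom_dim (homology n g d eps (\<lambda>_. True) k)"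

end

(*
  Over Z2 a space of dimension m has 2^m elements, so all dimension counts can be done as
  cardinality counts. In degree k the linearised differential gives |C_k| = |B_(k-1)| * |Z_k|
  (rank-nullity) and |Z_k| = |H_k| * |B_k| (Lagrange), hence MC_k = b_(k-1) + PC_k + b_k with
  |B_k| = 2^(b_k). The barcode computes b_k: as the filtration passes a critical height, the
  boundaries grow exactly by the kernel of the transfer map from the previous level, and the
  dimension of that kernel is the number of bars ending there; so b_k is the number of finite
  bars. Barcodes exist by the standard persistence algorithm: choose a basis of the cycles in
  echelon form for the order by height, taking for each pivot that is also the pivot of a
  boundary a boundary that appears as early as possible. That the linearised differential
  squares to zero follows from d o d = 0 and eps o d = 0 by a parity count over d (d q_i).
*)

theory Submission
  imports Defs "HOL-Library.Product_Lexorder"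
begin

section \<open>Linear algebra over Z2 with finite sets as vectors\<close>

notation xor_set (infixl "\<oplus>" 65)

lemma xor_set_simps [simp]:
  "x \<oplus> {} = x" "{} \<oplus> x = x" "x \<oplus> x = {}" "x \<oplus> (x \<oplus> y) = y" "x \<oplus> y \<oplus> y = x"
  by (auto simp: xor_set_def)

lemma xor_set_iff: "a \<in> x \<oplus> y \<longleftrightarrow> (a \<in> x) \<noteq> (a \<in> y)"
  by (auto simp: xor_set_def)

lemma xor_set_commute: "x \<oplus> y = y \<oplus> x"
  by (auto simp: xor_set_def)

lemma xor_set_eq_empty_iff: "x \<oplus> y = {} \<longleftrightarrow> x = y"
  by (auto simp: xor_set_def)

lemma xor_set_subset_Un: "x \<oplus> y \<subseteq> x \<union> y"
  by (auto simp: xor_set_def)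

lemma finite_xor_set [simp]: "finite x \<Longrightarrow> finite y \<Longrightarrow> finite (x \<oplus> y)"
  by (auto simp: xor_set_def)

lemma odd_card_xor_set:
  assumes "finite A" "finite B"
  shows "odd (card {x \<in> A \<oplus> B. P x}) \<longleftrightarrow> odd (card {x \<in> A. P x}) \<noteq> odd (card {x \<in> B. P x})"
proof -
  let ?A = "{x \<in> A. P x}" and ?B = "{x \<in> B. P x}"
  have fin: "finite ?A" "finite ?B"
    using assms by auto
  have "{x \<in> A \<oplus> B. P x} = (?A - ?B) \<union> (?B - ?A)"
    by (auto simp: xor_set_def)
  then have "card {x \<in> A \<oplus> B. P x} = card (?A - ?B) + card (?B - ?A)"
    using fin by (simp only:) (rule card_Un_disjoint, auto)
  moreover have "card (?A - ?B) = card ?A - card (?A \<inter> ?B)" "card (?B - ?A) = card ?B - card (?A \<inter> ?B)"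
    using fin by (simp_all add: card_Diff_subset_Int Int_commute)
  moreover have "card (?A \<inter> ?B) \<le> card ?A" "card (?A \<inter> ?B) \<le> card ?B"
    using fin by (simp_all add: card_mono)
  ultimately show ?thesis
    by presburger
qed

definition xor_sum :: "('a \<Rightarrow> 'b set) \<Rightarrow> 'a set \<Rightarrow> 'b set" where
  "xor_sum F S = {j. odd (card {i \<in> S. j \<in> F i})}"

lemma xor_sum_empty [simp]: "xor_sum F {} = {}"
  by (simp add: xor_sum_def)

lemma xor_sum_xor_set:
  assumes "finite S" "finite T"
  shows "xor_sum F (S \<oplus> T) = xor_sum F S \<oplus> xor_sum F T"
proof (rule set_eqI)
  fix j
  show "j \<in> xor_sum F (S \<oplus> T) \<longleftrightarrow> j \<in> xor_sum F S \<oplus> xor_sum F T"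
    using odd_card_xor_set[OF assms, of "\<lambda>i. j \<in> F i"] by (simp add: xor_sum_def xor_set_iff)
qed

lemma xor_sum_singleton [simp]: "xor_sum F {i} = F i"
proof -
  have "{i' \<in> {i}. j \<in> F i'} = (if j \<in> F i then {i} else {})" for j
    by auto
  then show ?thesis
    by (simp add: xor_sum_def)
qed

lemma xor_sum_insert:
  assumes "finite S" "i \<notin> S"
  shows "xor_sum F (insert i S) = F i \<oplus> xor_sum F S"
proof -
  have "insert i S = {i} \<oplus> S"
    using assms(2) by (auto simp: xor_set_def)
  then show ?thesis
    using xor_sum_xor_set[of "{i}" S F] assms(1) by simp
qed

lemma xor_sum_subset_UN: "xor_sum F S \<subseteq> (\<Union>i\<in>S. F i)"
proof
  fix j assume "j \<in> xor_sum F S"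
  then have "odd (card {i \<in> S. j \<in> F i})"
    by (simp add: xor_sum_def)
  then have "{i \<in> S. j \<in> F i} \<noteq> {}"
    by (metis card.empty even_zero)
  then show "j \<in> (\<Union>i\<in>S. F i)"
    by blast
qed

lemma finite_xor_sum: "finite S \<Longrightarrow> (\<And>i. i \<in> S \<Longrightarrow> finite (F i)) \<Longrightarrow> finite (xor_sum F S)"
  by (rule finite_subset[OF xor_sum_subset_UN]) auto

definition xor_subspace :: "'a set set \<Rightarrow> bool" where
  "xor_subspace W \<longleftrightarrow> {} \<in> W \<and> (\<forall>x\<in>W. \<forall>y\<in>W. x \<oplus> y \<in> W)"

lemma xor_subspace_Pow: "xor_subspace (Pow A)"
  by (auto simp: xor_subspace_def xor_set_def)

lemma xor_subspace_image:
  assumes "xor_subspace W" and "\<And>x y. x \<in> W \<Longrightarrow> y \<in> W \<Longrightarrow> D (x \<oplus> y) = D x \<oplus> D y"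
  shows "xor_subspace (D ` W)"
proof -
  have "{} \<in> W"
    using assms(1) by (simp add: xor_subspace_def)
  moreover from this have "D {} = {}"
    using assms(2)[of "{}" "{}"] by simp
  ultimately have "{} \<in> D ` W"
    by (metis image_eqI)
  moreover have "D x \<oplus> D y \<in> D ` W" if "x \<in> W" "y \<in> W" for x y
    using assms that unfolding xor_subspace_def by (metis image_eqI)
  ultimately show ?thesis
    unfolding xor_subspace_def by blast
qed

lemma xor_sum_in_subspace:
  assumes W: "xor_subspace W" and "finite S" "\<And>i. i \<in> S \<Longrightarrow> F i \<in> W"
  shows "xor_sum F S \<in> W"
  using assms(2,3)
proof (induction S rule: finite_induct)
  case empty
  then show ?case using W by (simp add: xor_subspace_def)
next
  case (insert i S)
  then show ?case using W by (simp add: xor_sum_insert xor_subspace_def)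
qed

definition xor_coset :: "'a set \<Rightarrow> 'a set set \<Rightarrow> 'a set set" where
  "xor_coset z B = (\<lambda>b. z \<oplus> b) ` B"

lemma card_xor_coset: "card (xor_coset z B) = card B"
  unfolding xor_coset_def by (rule card_image) (rule inj_onI, metis xor_set_simps(4))

lemma xor_coset_empty: "xor_coset {} B = B"
  by (simp add: xor_coset_def)

lemma self_in_xor_coset: "xor_subspace B \<Longrightarrow> z \<in> xor_coset z B"
  unfolding xor_coset_def xor_subspace_def by (metis image_eqI xor_set_simps(1))

lemma xor_coset_eq_iff:
  assumes B: "xor_subspace B"
  shows "xor_coset z B = xor_coset z' B \<longleftrightarrow> z \<oplus> z' \<in> B"
proof
  assume "xor_coset z B = xor_coset z' B"
  then obtain b where "b \<in> B" "z = z' \<oplus> b"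
    using self_in_xor_coset[OF B, of z] by (auto simp: xor_coset_def)
  moreover have "z' \<oplus> b \<oplus> z' = b"
    by (auto simp: xor_set_def)
  ultimately show "z \<oplus> z' \<in> B"
    by simp
next
  assume zz: "z \<oplus> z' \<in> B"
  have shift: "xor_coset x B \<subseteq> xor_coset y B" if "x \<oplus> y \<in> B" for x y
  proof
    fix u assume "u \<in> xor_coset x B"
    then obtain b where "b \<in> B" "u = x \<oplus> b"
      by (auto simp: xor_coset_def)
    moreover have "x \<oplus> b = y \<oplus> (x \<oplus> y \<oplus> b)"
      by (auto simp: xor_set_def)
    ultimately show "u \<in> xor_coset y B"
      using B that unfolding xor_coset_def xor_subspace_def by blast
  qed
  show "xor_coset z B = xor_coset z' B"
    using shift[OF zz] shift[of z' z] zz by (simp add: xor_set_commute)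
qed

lemma cadd_xor_coset:
  assumes B: "xor_subspace B"
  shows "cadd (xor_coset x B) (xor_coset y B) = xor_coset (x \<oplus> y) B"
proof (intro set_eqI iffI)
  fix u assume "u \<in> cadd (xor_coset x B) (xor_coset y B)"
  then obtain b1 b2 where "b1 \<in> B" "b2 \<in> B" "u = (x \<oplus> b1) \<oplus> (y \<oplus> b2)"
    unfolding cadd_def xor_coset_def by blast
  moreover have "(x \<oplus> b1) \<oplus> (y \<oplus> b2) = (x \<oplus> y) \<oplus> (b1 \<oplus> b2)"
    by (auto simp: xor_set_def)
  ultimately show "u \<in> xor_coset (x \<oplus> y) B"
    using B unfolding xor_coset_def xor_subspace_def by blast
next
  fix u assume "u \<in> xor_coset (x \<oplus> y) B"
  then obtain b where "b \<in> B" "u = (x \<oplus> b) \<oplus> y"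
    unfolding xor_coset_def by (auto simp: xor_set_def)
  then show "u \<in> cadd (xor_coset x B) (xor_coset y B)"
    using self_in_xor_coset[OF B, of y] unfolding cadd_def xor_coset_def by blast
qed

lemma card_eq_card_image_mult:
  assumes "finite A" and "\<And>y. y \<in> f ` A \<Longrightarrow> card {x \<in> A. f x = y} = m"
  shows "card A = card (f ` A) * m"
proof -
  have "card A = (\<Sum>y\<in>f ` A. card {x \<in> A. f x = y})"
    using sum.image_gen[OF assms(1), of "\<lambda>_. 1::nat" f] by simp
  then show ?thesis
    using assms(2) by simp
qed

lemma card_xor_subspace_eq_cosets_mult:
  assumes W: "xor_subspace W" "finite W" and B: "xor_subspace B" "B \<subseteq> W"
  shows "card W = card ((\<lambda>z. xor_coset z B) ` W) * card B"
proof (rule card_eq_card_image_mult[OF W(2)])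
  fix C assume "C \<in> (\<lambda>z. xor_coset z B) ` W"
  then obtain z0 where z0: "z0 \<in> W" "C = xor_coset z0 B"
    by auto
  have "{x \<in> W. xor_coset x B = C} = xor_coset z0 B"
  proof (intro set_eqI iffI)
    fix x assume "x \<in> {x \<in> W. xor_coset x B = C}"
    then have "z0 \<oplus> x \<in> B"
      using z0 xor_coset_eq_iff[OF B(1)] by (simp add: xor_set_commute)
    then show "x \<in> xor_coset z0 B"
      unfolding xor_coset_def by (metis image_eqI xor_set_simps(4))
  next
    fix x assume "x \<in> xor_coset z0 B"
    then obtain b where "b \<in> B" "x = z0 \<oplus> b"
      unfolding xor_coset_def by auto
    moreover have "x \<oplus> z0 = b"
      using \<open>x = z0 \<oplus> b\<close> by (auto simp: xor_set_def)
    ultimately show "x \<in> {x \<in> W. xor_coset x B = C}"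
      using z0 B W xor_coset_eq_iff[OF B(1)] unfolding xor_subspace_def by auto
  qed
  then show "card {x \<in> W. xor_coset x B = C} = card B"
    by (simp add: card_xor_coset)
qed

lemma card_rank_nullity:
  assumes C: "xor_subspace C" "finite C"
    and lin: "\<And>x y. x \<in> C \<Longrightarrow> y \<in> C \<Longrightarrow> D (x \<oplus> y) = D x \<oplus> D y"
  shows "card C = card (D ` C) * card {x \<in> C. D x = {}}"
proof (rule card_eq_card_image_mult[OF C(2)])
  fix y assume "y \<in> D ` C"
  then obtain z0 where z0: "z0 \<in> C" "y = D z0"
    by auto
  have "{x \<in> C. D x = y} = (\<lambda>b. z0 \<oplus> b) ` {x \<in> C. D x = {}}"
  proof (intro set_eqI iffI)
    fix x assume x: "x \<in> {x \<in> C. D x = y}"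
    then have "z0 \<oplus> x \<in> C"
      using z0 C unfolding xor_subspace_def by blast
    moreover have "D (z0 \<oplus> x) = {}"
      using lin[of z0 x] z0 x by simp
    ultimately show "x \<in> (\<lambda>b. z0 \<oplus> b) ` {x \<in> C. D x = {}}"
      by (metis (mono_tags, lifting) image_eqI mem_Collect_eq xor_set_simps(4))
  next
    fix x assume "x \<in> (\<lambda>b. z0 \<oplus> b) ` {x \<in> C. D x = {}}"
    then obtain b where "b \<in> C" "D b = {}" "x = z0 \<oplus> b"
      by auto
    moreover have "x \<in> C"
      using \<open>b \<in> C\<close> \<open>x = z0 \<oplus> b\<close> z0 C unfolding xor_subspace_def by blast
    ultimately show "x \<in> {x \<in> C. D x = y}"
      using lin[of z0 b] z0 by simp
  qed
  moreover have "inj_on (\<lambda>b. z0 \<oplus> b) {x \<in> C. D x = {}}"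
    by (rule inj_onI) (metis xor_set_simps(4))
  ultimately show "card {x \<in> C. D x = y} = card {x \<in> C. D x = {}}"
    by (simp add: card_image)
qed

definition supported_on :: "'a set \<Rightarrow> ('a \<Rightarrow> bool) set" where
  "supported_on A = {f. \<forall>j. f j \<longrightarrow> j \<in> A}"

lemma card_supported_on: "finite A \<Longrightarrow> card (supported_on A) = 2 ^ card A"
proof -
  assume "finite A"
  have "supported_on A = (\<lambda>S j. j \<in> S) ` Pow A"
  proof (intro set_eqI iffI)
    fix f assume "f \<in> supported_on A"
    then have "Collect f \<in> Pow A"
      by (auto simp: supported_on_def)
    moreover have "f = (\<lambda>j. j \<in> Collect f)"
      by simp
    ultimately show "f \<in> (\<lambda>S j. j \<in> S) ` Pow A"
      by (rule rev_image_eqI)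
  qed (auto simp: supported_on_def)
  moreover have "inj_on (\<lambda>S j. j \<in> S) (Pow A)"
    by (rule inj_onI) (metis Collect_mem_eq)
  ultimately show ?thesis
    using \<open>finite A\<close> by (simp add: card_image card_Pow)
qed

lemma bij_betw_supported_on_reindex:
  assumes e: "bij_betw e B A"
  shows "bij_betw (\<lambda>f i. i \<in> B \<and> f (e i)) (supported_on A) (supported_on B)"
proof (rule bij_betw_byWitness[where f' = "\<lambda>f j. j \<in> A \<and> f (inv_into B e j)"])
  have "e (inv_into B e j) = j" "inv_into B e j \<in> B" if "j \<in> A" for j
    using bij_betw_inv_into_right[OF e that] bij_betwE[OF bij_betw_inv_into[OF e]] that by auto
  then show "\<forall>f\<in>supported_on A. (\<lambda>j. j \<in> A \<and> inv_into B e j \<in> B \<and> f (e (inv_into B e j))) = f"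
    by (auto simp: supported_on_def fun_eq_iff)
  have "inv_into B e (e i) = i" "e i \<in> A" if "i \<in> B" for i
    using bij_betw_inv_into_left[OF e that] bij_betwE[OF e] that by auto
  then show "\<forall>f\<in>supported_on B. (\<lambda>i. i \<in> B \<and> e i \<in> A \<and> f (inv_into B e (e i))) = f"
    by (auto simp: supported_on_def fun_eq_iff)
qed (auto simp: supported_on_def)

lemma hom_dim_eq_card:
  assumes "finite A" and bij: "bij_betw \<phi> V (supported_on A)"
    and add: "\<forall>C1\<in>V. \<forall>C2\<in>V. \<phi> (cadd C1 C2) = (\<lambda>j. \<phi> C1 j \<noteq> \<phi> C2 j)"
  shows "hom_dim V = card A"
proof -
  define is_dim where "is_dim m \<longleftrightarrow> (\<exists>\<psi>. bij_betw \<psi> V {f :: nat \<Rightarrow> bool. \<forall>j. f j \<longrightarrow> j < m} \<and>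
      (\<forall>C1\<in>V. \<forall>C2\<in>V. \<psi> (cadd C1 C2) = (\<lambda>j. \<psi> C1 j \<noteq> \<psi> C2 j)))" for m
  obtain e where e: "bij_betw e {..<card A} A"
    using ex_bij_betw_nat_finite[OF \<open>finite A\<close>] unfolding atLeast0LessThan by blast
  define R where "R = (\<lambda>f i. i \<in> {..<card A} \<and> f (e i))"
  have "bij_betw (R \<circ> \<phi>) V {f. \<forall>j. f j \<longrightarrow> j < card A}"
    using bij_betw_trans[OF bij bij_betw_supported_on_reindex[OF e]] by (simp add: R_def supported_on_def)
  moreover have "\<forall>C1\<in>V. \<forall>C2\<in>V. (R \<circ> \<phi>) (cadd C1 C2) = (\<lambda>j. (R \<circ> \<phi>) C1 j \<noteq> (R \<circ> \<phi>) C2 j)"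
    using add by (auto simp: R_def fun_eq_iff)
  ultimately have "is_dim (card A)"
    unfolding is_dim_def by (intro exI conjI)
  moreover have "m = card A" if dim: "is_dim m" for m
  proof -
    obtain \<psi> where "bij_betw \<psi> V (supported_on {..<m})"
      using dim unfolding is_dim_def supported_on_def lessThan_iff by blast
    then have "2 ^ m = card V"
      using bij_betw_same_card card_supported_on[of "{..<m}"] by fastforce
    also have "\<dots> = 2 ^ card A"
      using bij_betw_same_card[OF bij] card_supported_on[OF \<open>finite A\<close>] by simp
    finally show ?thesis
      by simp
  qed
  ultimately have "(THE m. is_dim m) = card A"
    by (rule the_equality)
  then show ?thesis
    by (simp add: hom_dim_def is_dim_def)
qed

section \<open>Echelon families\<close>

locale pivot_order =
  fixes key :: "'a \<Rightarrow> 'b::linorder"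
  assumes inj_key: "inj key"
begin

definition pivot :: "'a set \<Rightarrow> 'a" where
  "pivot z = inv key (Max (key ` z))"

lemma pivot_is_max:
  assumes "finite z" "z \<noteq> {}"
  shows "pivot z \<in> z" "key (pivot z) = Max (key ` z)"
proof -
  have "Max (key ` z) \<in> key ` z"
    using assms by (intro Max_in) auto
  then obtain i where i: "i \<in> z" "key i = Max (key ` z)"
    by auto
  moreover have "pivot z = i"
    unfolding pivot_def i(2)[symmetric] using inj_key by simp
  ultimately show "pivot z \<in> z" "key (pivot z) = Max (key ` z)"
    by simp_all
qed

lemma pivot_in: "finite z \<Longrightarrow> z \<noteq> {} \<Longrightarrow> pivot z \<in> z"
  by (rule pivot_is_max)

lemma key_le_pivot:
  assumes "finite z" "j \<in> z"
  shows "key j \<le> key (pivot z)"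
proof -
  have "key (pivot z) = Max (key ` z)"
    using pivot_is_max(2) assms by blast
  then show ?thesis
    using assms by simp
qed

lemma key_less_pivot:
  assumes "finite z" "z \<noteq> {}" "finite y" "y \<noteq> {}" "pivot y = pivot z" "j \<in> z \<oplus> y"
  shows "key j < key (pivot z)"
proof -
  have "pivot z \<in> z" "pivot z \<in> y"
    using pivot_in[OF assms(1,2)] pivot_in[OF assms(3,4)] assms(5) by simp_all
  then have "pivot z \<notin> z \<oplus> y"
    by (simp add: xor_set_iff)
  moreover have "key j \<le> key (pivot z)"
    using assms key_le_pivot[of z j] key_le_pivot[of y j] by (auto simp: xor_set_iff)
  ultimately show ?thesis
    using assms(6) inj_key by (metis injD order_less_le)
qed

definition echelon :: "('a \<Rightarrow> 'a set) \<Rightarrow> 'a set \<Rightarrow> bool" where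
  "echelon e P \<longleftrightarrow> (\<forall>\<tau>\<in>P. finite (e \<tau>) \<and> e \<tau> \<noteq> {} \<and> pivot (e \<tau>) = \<tau>)"

lemma echelon_subset: "echelon e P \<Longrightarrow> Q \<subseteq> P \<Longrightarrow> echelon e Q"
  by (auto simp: echelon_def)

lemma pivot_in_xor_sum:
  assumes "echelon e S" "finite S" "S \<noteq> {}"
  shows "pivot S \<in> xor_sum e S"
proof -
  have "{\<tau> \<in> S. pivot S \<in> e \<tau>} = {pivot S}"
  proof (intro set_eqI iffI)
    fix \<tau> assume \<tau>: "\<tau> \<in> {\<tau> \<in> S. pivot S \<in> e \<tau>}"
    then have "key (pivot S) \<le> key \<tau>"
      using assms(1) key_le_pivot[of "e \<tau>"] by (auto simp: echelon_def)
    moreover have "key \<tau> \<le> key (pivot S)"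
      using \<tau> key_le_pivot[OF assms(2)] by blast
    ultimately show "\<tau> \<in> {pivot S}"
      using inj_key by (simp add: inj_eq)
  next
    fix \<tau> assume "\<tau> \<in> {pivot S}"
    then show "\<tau> \<in> {\<tau> \<in> S. pivot S \<in> e \<tau>}"
      using assms pivot_in[OF assms(2,3)] pivot_in[of "e (pivot S)"] by (auto simp: echelon_def)
  qed
  then show ?thesis
    by (simp add: xor_sum_def)
qed

lemma xor_sum_echelon_inj:
  assumes "echelon e (S1 \<union> S2)" "finite S1" "finite S2" "xor_sum e S1 = xor_sum e S2"
  shows "S1 = S2"
proof (rule ccontr)
  assume "S1 \<noteq> S2"
  then have "S1 \<oplus> S2 \<noteq> {}"
    by (simp add: xor_set_eq_empty_iff)
  moreover have "echelon e (S1 \<oplus> S2)"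
    using assms(1) xor_set_subset_Un by (rule echelon_subset)
  moreover have "xor_sum e (S1 \<oplus> S2) = {}"
    using assms(2-4) by (simp add: xor_sum_xor_set)
  ultimately show False
    using pivot_in_xor_sum[of e "S1 \<oplus> S2"] assms(2,3) by auto
qed

definition lower_set :: "'a set \<Rightarrow> 'a set \<Rightarrow> 'a set" where
  "lower_set G z = {j \<in> G. \<exists>i\<in>z. key j \<le> key i}"

lemma card_lower_set_less:
  assumes "finite G" "\<tau> \<in> G" "\<tau> \<in> z" "\<And>j. j \<in> z' \<Longrightarrow> key j < key \<tau>"
  shows "card (lower_set G z') < card (lower_set G z)"
proof (rule psubset_card_mono)
  have "lower_set G z' \<subseteq> lower_set G z"
  proof
    fix j assume "j \<in> lower_set G z'"
    then obtain i where "j \<in> G" "i \<in> z'" "key j \<le> key i"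
      by (auto simp: lower_set_def)
    then have "key j \<le> key \<tau>"
      using assms(4)[of i] by simp
    then show "j \<in> lower_set G z"
      using \<open>j \<in> G\<close> assms(3) by (auto simp: lower_set_def)
  qed
  moreover have "\<tau> \<in> lower_set G z - lower_set G z'"
    using assms(2-4) by (auto simp: lower_set_def not_le)
  ultimately show "lower_set G z' \<subset> lower_set G z"
    by blast
qed (simp add: lower_set_def assms(1))

text \<open>Gaussian elimination: cancel the pivot of z against the basis vector with that pivot
  and recurse on the result, whose elements all lie strictly below the old pivot.\<close>
lemma echelon_spans:
  assumes G: "finite G" and W: "xor_subspace W" "\<And>z. z \<in> W \<Longrightarrow> z \<subseteq> G"
    and pivots: "\<And>z. z \<in> W \<Longrightarrow> z \<noteq> {} \<Longrightarrow> pivot z \<in> P"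
    and e: "echelon e P" "\<And>\<tau>. \<tau> \<in> P \<Longrightarrow> e \<tau> \<in> W"
  shows "z \<in> W \<Longrightarrow> \<exists>S. S \<subseteq> P \<and> finite S \<and> xor_sum e S = z \<and> (\<forall>\<tau>\<in>S. \<exists>j\<in>z. key \<tau> \<le> key j)"
proof (induction "card (lower_set G z)" arbitrary: z rule: less_induct)
  case less
  show ?case
  proof (cases "z = {}")
    case True
    then show ?thesis
      by (intro exI[of _ "{}"]) simp
  next
    case False
    define \<tau> where "\<tau> = pivot z"
    have fin_z: "finite z"
      using W(2)[OF less.prems] G by (rule finite_subset)
    have \<tau>: "\<tau> \<in> P" "\<tau> \<in> z"
      using pivots[OF less.prems False] pivot_in[OF fin_z False] by (simp_all add: \<tau>_def)
    have e\<tau>: "finite (e \<tau>)" "e \<tau> \<noteq> {}" "pivot (e \<tau>) = \<tau>" "e \<tau> \<in> W"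
      using e \<tau>(1) by (auto simp: echelon_def)
    define z' where "z' = z \<oplus> e \<tau>"
    have "z' \<in> W"
      using W(1) less.prems e\<tau>(4) unfolding z'_def xor_subspace_def by blast
    have below: "key j < key \<tau>" if "j \<in> z'" for j
      using key_less_pivot[OF fin_z False e\<tau>(1,2)] e\<tau>(3) that by (simp add: z'_def \<tau>_def)
    have "card (lower_set G z') < card (lower_set G z)"
      using G \<tau>(2) W(2)[OF less.prems] below by (intro card_lower_set_less) auto
    then obtain S' where S': "S' \<subseteq> P" "finite S'" "xor_sum e S' = z'" "\<forall>\<tau>'\<in>S'. \<exists>j\<in>z'. key \<tau>' \<le> key j"
      using less.hyps \<open>z' \<in> W\<close> by blast
    have S'_below: "key \<tau>' < key \<tau>" if "\<tau>' \<in> S'" for \<tau>'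
      using S'(4) that below by (meson order_le_less_trans)
    then have "\<tau> \<notin> S'"
      by blast
    then have "xor_sum e (insert \<tau> S') = z"
      using S'(2,3) by (simp add: xor_sum_insert z'_def xor_set_commute[of z])
    moreover have "\<forall>\<tau>'\<in>insert \<tau> S'. \<exists>j\<in>z. key \<tau>' \<le> key j"
      using S'_below \<tau>(2) by (auto intro: less_imp_le)
    ultimately show ?thesis
      using S'(1,2) \<tau>(1) by (intro exI[of _ "insert \<tau> S'"]) simp
  qed
qed

end

section \<open>The linearised differential\<close>

text \<open>The parity of lin_coeff eps l w is the coefficient of q_l in the length-one part of
  phi(w), where phi(q_j) = q_j + eps(q_j): it counts the occurrences of l in w all of whose
  other letters are augmented.\<close>
fun lin_coeff :: "(nat \<Rightarrow> bool) \<Rightarrow> nat \<Rightarrow> nat list \<Rightarrow> nat" where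
  "lin_coeff eps l [] = 0"
| "lin_coeff eps l (a # w) =
     (if eps a then lin_coeff eps l w else 0) + (if a = l \<and> list_all eps w then 1 else 0)"

lemma lin_coeff_append:
  "lin_coeff eps l (u @ v) =
     (if list_all eps v then lin_coeff eps l u else 0) + (if list_all eps u then lin_coeff eps l v else 0)"
  by (induction u) auto

lemma lin_coeff_eq_sum:
  "lin_coeff eps l w =
     (\<Sum>k<length w. if w ! k = l \<and> list_all eps (take k w) \<and> list_all eps (drop (Suc k) w) then 1 else 0)"
proof (induction w)
  case (Cons a w)
  have "(\<Sum>k<length w. if (a # w) ! Suc k = l \<and> list_all eps (take (Suc k) (a # w))
          \<and> list_all eps (drop (Suc (Suc k)) (a # w)) then 1 else 0) =
        (if eps a then lin_coeff eps l w else 0)"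
    using Cons.IH by (auto intro: sum.neutral)
  then show ?case
    by (simp add: sum.lessThan_Suc_shift del: sum.lessThan_Suc)
qed simp

lemma all_but_nth_iff:
  assumes "k < length w"
  shows "(\<forall>m<length w. m \<noteq> k \<longrightarrow> P (w ! m)) \<longleftrightarrow> list_all P (take k w) \<and> list_all P (drop (Suc k) w)"
proof -
  have "(\<forall>m<length w. m \<noteq> k \<longrightarrow> P (w ! m)) \<longleftrightarrow> (\<forall>m<k. P (w ! m)) \<and> (\<forall>m. k < m \<and> m < length w \<longrightarrow> P (w ! m))"
    using assms by (auto simp: nat_neq_iff)
  also have "(\<forall>m<k. P (w ! m)) \<longleftrightarrow> list_all P (take k w)"
    using assms by (auto simp: list_all_length)
  also have "(\<forall>m. k < m \<and> m < length w \<longrightarrow> P (w ! m)) \<longleftrightarrow> list_all P (drop (Suc k) w)"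
  proof -
    have "\<exists>i. m = Suc (k + i)" if "k < m" for m
      using that by presburger
    then show ?thesis
      unfolding list_all_length by (auto simp: less_diff_conv add.commute)
  qed
  finally show ?thesis .
qed

lemma sum_Sigma_eq_nested:
  "finite A \<Longrightarrow> (\<And>a. a \<in> A \<Longrightarrow> finite (B a)) \<Longrightarrow> (\<Sum>p\<in>Sigma A B. f p) = (\<Sum>a\<in>A. \<Sum>b\<in>B a. f (a, b))"
  by (subst sum.Sigma) auto

lemma even_sum_if_even_fibres:
  fixes F :: "'b \<Rightarrow> nat"
  assumes "finite A" and "\<And>x. even (card {a \<in> A. f a = x})"
  shows "even (\<Sum>a\<in>A. F (f a))"
proof -
  have "(\<Sum>a\<in>A. F (f a)) = (\<Sum>x\<in>f ` A. \<Sum>a\<in>{a \<in> A. f a = x}. F (f a))"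
    by (rule sum.image_gen[OF assms(1)])
  also have "\<dots> = (\<Sum>x\<in>f ` A. card {a \<in> A. f a = x} * F x)"
    by (rule sum.cong) auto
  finally show ?thesis
    using assms(2) by (simp add: dvd_sum)
qed

locale augmented_dga =
  fixes n :: nat and g :: "nat \<Rightarrow> int" and h :: "nat \<Rightarrow> real"
    and d :: "nat \<Rightarrow> nat list set" and eps :: "nat \<Rightarrow> bool"
  assumes dga: "CE_dga n g h d" and aug: "augmentation n g d eps"
begin

lemma height_pos: "i < n \<Longrightarrow> 0 < h i"
  using dga by (simp add: CE_dga_def)

lemma finite_d: "i < n \<Longrightarrow> finite (d i)"
  using dga by (simp add: CE_dga_def)

lemma d_word:
  "i < n \<Longrightarrow> w \<in> d i \<Longrightarrow> set w \<subseteq> {..<n} \<and> word_grade g w = g i - 1 \<and> word_height h w < h i"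
  using dga by (simp add: CE_dga_def)

lemma nth_d_less: "i < n \<Longrightarrow> w \<in> d i \<Longrightarrow> k < length w \<Longrightarrow> w ! k < n"
  using d_word by (meson lessThan_iff nth_mem subsetD)

lemma even_card_dword: "i < n \<Longrightarrow> even (card {w \<in> d i. x \<in> dword d w})"
  using dga by (simp add: CE_dga_def dpoly_def set_eq_iff)

lemma grade_augmented: "i < n \<Longrightarrow> eps i \<Longrightarrow> g i = 0"
  using aug by (simp add: augmentation_def)

lemma even_card_augmented: "i < n \<Longrightarrow> even (card {w \<in> d i. list_all eps w})"
  using aug by (simp add: augmentation_def list_all_iff)

definition lin_count :: "nat \<Rightarrow> nat \<Rightarrow> nat" where
  "lin_count i j = (\<Sum>w\<in>d i. lin_coeff eps j w)"

lemma lin_count_eq_sum: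
  "lin_count i j = (\<Sum>w\<in>d i. \<Sum>k<length w.
     if w ! k = j \<and> list_all eps (take k w) \<and> list_all eps (drop (Suc k) w) then 1 else 0)"
  by (simp add: lin_count_def lin_coeff_eq_sum)

lemma lin_diff_eq_lin_count: "i < n \<Longrightarrow> lin_diff d eps i = {j. odd (lin_count i j)}"
proof -
  assume i: "i < n"
  let ?pos = "\<lambda>j w k. w ! k = j \<and> list_all eps (take k w) \<and> list_all eps (drop (Suc k) w)"
  have "{(w, k). w \<in> d i \<and> k < length w \<and> w ! k = j \<and> (\<forall>m<length w. m \<noteq> k \<longrightarrow> eps (w ! m))} =
        (SIGMA w:d i. {k \<in> {..<length w}. ?pos j w k})" for j
    using all_but_nth_iff by auto
  moreover have "card {k \<in> {..<length w}. ?pos j w k} = lin_coeff eps j w" for j w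
    unfolding lin_coeff_eq_sum by (simp add: sum.inter_filter[symmetric])
  then have "card (SIGMA w:d i. {k \<in> {..<length w}. ?pos j w k}) = lin_count i j" for j
    using finite_d[OF i] by (simp add: lin_count_def)
  ultimately show ?thesis
    unfolding lin_diff_def by simp
qed

definition replace_letter :: "nat list \<times> nat \<times> nat list \<Rightarrow> nat list" where
  "replace_letter = (\<lambda>(w, k, v). take k w @ v @ drop (Suc k) w)"

text \<open>Summing over all ways of applying the differential to one letter of a word of d i computes
  d (d i); it vanishes over Z2, so every resulting word occurs an even number of times.\<close>
lemma even_sum_replace_letter:
  fixes F :: "nat list \<Rightarrow> nat"
  assumes i: "i < n"
  shows "even (\<Sum>w\<in>d i. \<Sum>k<length w. \<Sum>v\<in>d (w ! k). F (replace_letter (w, k, v)))"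
proof -
  define T where "T = (SIGMA w:d i. SIGMA k:{..<length w}. d (w ! k))"
  have fin: "finite (SIGMA k:{..<length w}. d (w ! k))" if "w \<in> d i" for w
    using finite_d nth_d_less[OF i that] by auto
  have "even (\<Sum>\<tau>\<in>T. F (replace_letter \<tau>))"
  proof (rule even_sum_if_even_fibres[where f = replace_letter])
    show "finite T"
      unfolding T_def using finite_d[OF i] fin by auto
    fix x
    have "card {\<tau> \<in> T. replace_letter \<tau> = x} =
          (\<Sum>w\<in>d i. card {(k, v). k < length w \<and> v \<in> d (w ! k) \<and> take k w @ v @ drop (Suc k) w = x})"
    proof -
      have "{\<tau> \<in> T. replace_letter \<tau> = x} =
            (SIGMA w:d i. {(k, v). k < length w \<and> v \<in> d (w ! k) \<and> take k w @ v @ drop (Suc k) w = x})"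
        by (auto simp: T_def replace_letter_def)
      moreover have "finite {(k, v). k < length w \<and> v \<in> d (w ! k) \<and> take k w @ v @ drop (Suc k) w = x}"
        if "w \<in> d i" for w
        by (rule finite_subset[OF _ fin[OF that]]) auto
      ultimately show ?thesis
        using finite_d[OF i] by simp
    qed
    moreover have "even (\<Sum>w\<in>d i. card {(k, v). k < length w \<and> v \<in> d (w ! k) \<and> take k w @ v @ drop (Suc k) w = x})
        \<longleftrightarrow> even (card {w \<in> d i. x \<in> dword d w})"
      using finite_d[OF i] by (simp add: even_sum_iff dword_def)
    ultimately show "even (card {\<tau> \<in> T. replace_letter \<tau> = x})"
      using even_card_dword[OF i] by simp
  qed
  moreover have "(\<Sum>\<tau>\<in>T. F (replace_letter \<tau>)) =
      (\<Sum>w\<in>d i. \<Sum>kv\<in>(SIGMA k:{..<length w}. d (w ! k)). F (replace_letter (w, kv)))"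
    unfolding T_def by (rule sum_Sigma_eq_nested[OF finite_d[OF i] fin])
  moreover have "\<dots> = (\<Sum>w\<in>d i. \<Sum>k<length w. \<Sum>v\<in>d (w ! k). F (replace_letter (w, k, v)))"
    by (intro sum.cong refl sum_Sigma_eq_nested) (auto intro: finite_d nth_d_less[OF i])
  ultimately show ?thesis
    by simp
qed

lemma sum_lin_count_mult:
  assumes i: "i < n"
  shows "(\<Sum>j<n. lin_count i j * lin_count j l) = (\<Sum>w\<in>d i. \<Sum>k<length w.
     if list_all eps (take k w) \<and> list_all eps (drop (Suc k) w) then lin_count (w ! k) l else 0)"
  (is "_ = (\<Sum>w\<in>d i. \<Sum>k<length w. if ?others w k then _ else 0)")
proof -
  have "(if P then 1 else 0) * c = (if P then c else 0)" for P and c :: nat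
    by simp
  then have "(\<Sum>j<n. lin_count i j * lin_count j l) =
      (\<Sum>j<n. \<Sum>w\<in>d i. \<Sum>k<length w. if w ! k = j \<and> ?others w k then lin_count j l else 0)"
    by (simp add: lin_count_eq_sum[of i] sum_distrib_right)
  also have "\<dots> = (\<Sum>w\<in>d i. \<Sum>k<length w. \<Sum>j<n. if w ! k = j \<and> ?others w k then lin_count j l else 0)"
    by (simp add: sum.swap[where B = "{..<n}"])
  also have "\<dots> = (\<Sum>w\<in>d i. \<Sum>k<length w. if ?others w k then lin_count (w ! k) l else 0)"
    by (intro sum.cong refl) (auto simp: nth_d_less[OF i])
  finally show ?thesis .
qed

text \<open>Expand d (d q_i) letter by letter. An occurrence of l in a word u @ v @ y, where v is a
  word of d (w ! k), lies either in v with u and y augmented, which yields the matrix square,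
  or outside v with v augmented; words v of the latter kind are even in number as eps o d = 0.\<close>
lemma even_sum_lin_count_mult:
  assumes i: "i < n"
  shows "even (\<Sum>j<n. lin_count i j * lin_count j l)"
proof -
  define others where "others w k \<longleftrightarrow> list_all eps (take k w) \<and> list_all eps (drop (Suc k) w)" for w k
  define rest where "rest w k = lin_coeff eps l (take k w @ drop (Suc k) w)" for w k
  have "lin_coeff eps l (replace_letter (w, k, v)) =
        (if others w k then lin_coeff eps l v else 0) + (if list_all eps v then rest w k else 0)" for w k v
    by (simp add: replace_letter_def others_def rest_def lin_coeff_append)
  then have "even ((\<Sum>w\<in>d i. \<Sum>k<length w. \<Sum>v\<in>d (w ! k). if others w k then lin_coeff eps l v else 0) +
                   (\<Sum>w\<in>d i. \<Sum>k<length w. \<Sum>v\<in>d (w ! k). if list_all eps v then rest w k else 0))"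
    using even_sum_replace_letter[OF i, of "lin_coeff eps l"] by (simp add: sum.distrib)
  moreover have "even (\<Sum>w\<in>d i. \<Sum>k<length w. \<Sum>v\<in>d (w ! k). if list_all eps v then rest w k else 0)"
  proof (rule dvd_sum, rule dvd_sum)
    fix w k assume "w \<in> d i" "k \<in> {..<length w}"
    then show "even (\<Sum>v\<in>d (w ! k). if list_all eps v then rest w k else 0)"
      using finite_d even_card_augmented nth_d_less[OF i] by (simp add: sum.inter_filter[symmetric])
  qed
  moreover have "(\<Sum>w\<in>d i. \<Sum>k<length w. \<Sum>v\<in>d (w ! k). if others w k then lin_coeff eps l v else 0) =
                 (\<Sum>j<n. lin_count i j * lin_count j l)"
    unfolding sum_lin_count_mult[OF i] others_def
    by (intro sum.cong refl) (auto simp: lin_count_def)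
  ultimately show ?thesis
    by simp
qed

lemma lin_count_eq_0: "i < n \<Longrightarrow> n \<le> j \<Longrightarrow> lin_count i j = 0"
  by (auto simp: lin_count_eq_sum intro!: sum.neutral dest: nth_d_less)

lemma lin_diff_subset:
  assumes "i < n"
  shows "lin_diff d eps i \<subseteq> {..<n}"
proof
  fix j assume "j \<in> lin_diff d eps i"
  then have "lin_count i j \<noteq> 0"
    using assms by (auto simp: lin_diff_eq_lin_count intro: odd_pos)
  then show "j \<in> {..<n}"
    using lin_count_eq_0[OF assms] by (meson lessThan_iff not_le)
qed

lemma lin_D_lin_diff: "i < n \<Longrightarrow> lin_D d eps (lin_diff d eps i) = {}"
proof -
  assume i: "i < n"
  have "{j \<in> lin_diff d eps i. l \<in> lin_diff d eps j} = {j \<in> {..<n}. odd (lin_count i j * lin_count j l)}" for l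
    using lin_diff_subset[OF i] by (auto simp: lin_diff_eq_lin_count i)
  then show ?thesis
    using even_sum_lin_count_mult[OF i] by (simp add: lin_D_def even_sum_iff)
qed

lemma lin_diff_witness:
  assumes "i < n" "j \<in> lin_diff d eps i"
  obtains w k where "w \<in> d i" "k < length w" "w ! k = j"
    "list_all eps (take k w)" "list_all eps (drop (Suc k) w)"
proof -
  have "lin_count i j \<noteq> 0"
    using assms by (auto simp: lin_diff_eq_lin_count intro: odd_pos)
  then obtain w where w: "w \<in> d i"
    "(\<Sum>k<length w. if w ! k = j \<and> list_all eps (take k w) \<and> list_all eps (drop (Suc k) w) then 1 else 0)
       \<noteq> (0::nat)"
    unfolding lin_count_eq_sum by (rule sum.not_neutral_contains_not_neutral)
  then obtain k where "k < length w"
    "(if w ! k = j \<and> list_all eps (take k w) \<and> list_all eps (drop (Suc k) w) then 1 else 0) \<noteq> (0::nat)"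
    by (auto elim: sum.not_neutral_contains_not_neutral)
  then show ?thesis
    using that w(1) by (simp split: if_splits)
qed

lemma lin_diff_grade_height:
  assumes i: "i < n" and j: "j \<in> lin_diff d eps i"
  shows "j < n" "g j = g i - 1" "h j < h i"
proof -
  show "j < n"
    using lin_diff_subset[OF i] j by blast
  obtain w k where w: "w \<in> d i" "k < length w" "w ! k = j"
    and aug_parts: "list_all eps (take k w)" "list_all eps (drop (Suc k) w)"
    using lin_diff_witness[OF i j] .
  have split: "w = take k w @ j # drop (Suc k) w"
    using w(2,3) id_take_nth_drop by metis
  have letters: "set (take k w) \<subseteq> {..<n}" "set (drop (Suc k) w) \<subseteq> {..<n}"
    using d_word[OF i w(1)] set_take_subset set_drop_subset by fastforce+
  have grade_0: "sum_list (map g xs) = 0" if "list_all eps xs" "set xs \<subseteq> {..<n}" for xs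
    using that grade_augmented by (induction xs) auto
  have "sum_list (map g (take k w)) = 0" "sum_list (map g (drop (Suc k) w)) = 0"
    using aug_parts letters by (auto intro: grade_0)
  then have "word_grade g w = g j"
    unfolding word_grade_def by (subst split) simp
  then show "g j = g i - 1"
    using d_word[OF i w(1)] by simp
  have height_nonneg: "0 \<le> sum_list (map h xs)" if "set xs \<subseteq> {..<n}" for xs
    using that by (induction xs) (auto intro!: add_nonneg_nonneg less_imp_le[OF height_pos])
  have "0 \<le> sum_list (map h (take k w))" "0 \<le> sum_list (map h (drop (Suc k) w))"
    using letters by (auto intro: height_nonneg)
  then have "h j \<le> word_height h w"
    unfolding word_height_def by (subst split) simp
  then show "h j < h i"
    using d_word[OF i w(1)] by simp
qed

lemma lin_D_eq_xor_sum: "lin_D d eps S = xor_sum (lin_diff d eps) S"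
  by (simp add: lin_D_def xor_sum_def)

lemma lin_D_xor_set: "finite S \<Longrightarrow> finite T \<Longrightarrow> lin_D d eps (S \<oplus> T) = lin_D d eps S \<oplus> lin_D d eps T"
  by (simp add: lin_D_eq_xor_sum xor_sum_xor_set)

lemma lin_D_empty [simp]: "lin_D d eps {} = {}"
  by (simp add: lin_D_eq_xor_sum)

lemma finite_lin_D: "S \<subseteq> {..<n} \<Longrightarrow> finite (lin_D d eps S)"
  unfolding lin_D_eq_xor_sum
  by (rule finite_xor_sum) (auto intro: finite_subset[OF lin_diff_subset] finite_subset)

lemma lin_D_lin_D: "S \<subseteq> {..<n} \<Longrightarrow> lin_D d eps (lin_D d eps S) = {}"
proof (induction S rule: infinite_finite_induct)
  case (infinite S)
  then show ?case
    using finite_subset by blast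
next
  case (insert i S)
  have fin: "finite (lin_diff d eps i)" "finite (lin_D d eps S)"
    using insert by (auto intro: finite_subset[OF lin_diff_subset] finite_lin_D)
  have "lin_D d eps (insert i S) = lin_diff d eps i \<oplus> lin_D d eps S"
    using insert by (simp add: lin_D_eq_xor_sum xor_sum_insert)
  then show ?case
    using insert lin_D_xor_set[OF fin] lin_D_lin_diff by simp
qed simp

section \<open>The filtered complex\<close>

definition sublevel :: "real \<Rightarrow> nat set" where
  "sublevel t = {i. i < n \<and> h i \<le> t}"

definition generators :: "real \<Rightarrow> int \<Rightarrow> nat set" where
  "generators t k = {i \<in> sublevel t. g i = k}"

abbreviation "chains_at t k \<equiv> chains n g (level h t) k"
abbreviation "cycles_at t k \<equiv> cycles n g d eps (level h t) k"
abbreviation "boundaries_at t k \<equiv> boundaries n g d eps (level h t) k"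
abbreviation "homology_at t k \<equiv> homology n g d eps (level h t) k"

lemma finite_sublevel [simp]: "finite (sublevel t)"
  by (simp add: sublevel_def)

lemma sublevel_mono: "s \<le> t \<Longrightarrow> sublevel s \<subseteq> sublevel t"
  by (auto simp: sublevel_def)

lemma sublevel_eq_if_bounded:
  assumes "\<And>i. i \<in> sublevel t \<Longrightarrow> h i \<le> p" "p \<le> t"
  shows "sublevel p = sublevel t"
  using assms by (auto simp: sublevel_def)

lemma chains_at_eq: "chains_at t k = Pow (generators t k)"
  by (auto simp: chains_def generators_def sublevel_def level_def)

lemma finite_generators [simp]: "finite (generators t k)"
  by (simp add: generators_def)

lemma chain_subset: "S \<in> chains_at t k \<Longrightarrow> S \<subseteq> {..<n}"
  by (auto simp: chains_at_eq generators_def sublevel_def)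

lemma finite_chain: "S \<in> chains_at t k \<Longrightarrow> finite S"
  by (auto simp: chains_at_eq intro: finite_subset)

lemma finite_chains_at: "finite (chains_at t k)"
  by (simp add: chains_at_eq)

lemma xor_subspace_chains_at: "xor_subspace (chains_at t k)"
  by (simp add: chains_at_eq xor_subspace_Pow)

lemma chains_at_mono: "s \<le> t \<Longrightarrow> chains_at s k \<subseteq> chains_at t k"
  by (auto simp: chains_def level_def)

lemma lin_D_below:
  assumes "S \<in> chains_at t (k + 1)" "j \<in> lin_D d eps S"
  obtains i where "i \<in> S" "j \<in> generators t k" "h j < h i"
proof -
  obtain i where i: "i \<in> S" "j \<in> lin_diff d eps i"
    using assms(2) xor_sum_subset_UN by (fastforce simp: lin_D_eq_xor_sum)
  then have "i \<in> generators t (k + 1)"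
    using assms(1) by (auto simp: chains_at_eq)
  then show ?thesis
    using that[OF i(1)] lin_diff_grade_height[OF _ i(2)] by (force simp: generators_def sublevel_def)
qed

lemma lin_D_chains_at: "S \<in> chains_at t (k + 1) \<Longrightarrow> lin_D d eps S \<in> chains_at t k"
  unfolding chains_at_eq[of t k] by (blast elim: lin_D_below)

lemma xor_subspace_cycles_at: "xor_subspace (cycles_at t k)"
  using xor_subspace_chains_at[of t k] finite_chain
  by (auto simp: xor_subspace_def cycles_def lin_D_xor_set)

lemma xor_subspace_boundaries_at: "xor_subspace (boundaries_at t k)"
  unfolding boundaries_def
  by (rule xor_subspace_image[OF xor_subspace_chains_at]) (simp add: lin_D_xor_set finite_chain)

lemma boundaries_subset_cycles: "boundaries_at t k \<subseteq> cycles_at t k"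
  by (auto simp: boundaries_def cycles_def lin_D_chains_at lin_D_lin_D chain_subset)

lemma finite_cycles_at: "finite (cycles_at t k)"
  using finite_chains_at by (simp add: cycles_def)

lemma finite_boundaries_at: "finite (boundaries_at t k)"
  using finite_chains_at by (simp add: boundaries_def)

lemma boundaries_at_empty: "sublevel t = {} \<Longrightarrow> boundaries_at t k = {{}}"
  by (auto simp: boundaries_def chains_at_eq generators_def)

lemma cycles_at_mono: "s \<le> t \<Longrightarrow> cycles_at s k \<subseteq> cycles_at t k"
  using chains_at_mono by (auto simp: cycles_def)

lemma boundaries_at_mono: "s \<le> t \<Longrightarrow> boundaries_at s k \<subseteq> boundaries_at t k"
  unfolding boundaries_def by (intro image_mono chains_at_mono)

lemma homology_at_eq: "homology_at t k = (\<lambda>z. xor_coset z (boundaries_at t k)) ` cycles_at t k"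
  by (simp add: homology_def xor_coset_def)

lemma homology_at_cases:
  assumes "C \<in> homology_at t k"
  obtains z where "z \<in> cycles_at t k" "C = xor_coset z (boundaries_at t k)"
  using assms by (auto simp: homology_at_eq)

lemma boundaries_in_homology_at: "boundaries_at t k \<in> homology_at t k"
  using xor_subspace_cycles_at[of t k] xor_coset_empty[of "boundaries_at t k"]
  unfolding homology_at_eq xor_subspace_def by (metis image_eqI)

lemma card_cycles_at: "card (cycles_at t k) = card (homology_at t k) * card (boundaries_at t k)"
  unfolding homology_at_eq
  by (rule card_xor_subspace_eq_cosets_mult[OF xor_subspace_cycles_at finite_cycles_at
        xor_subspace_boundaries_at boundaries_subset_cycles])

lemma card_chains_at: "card (chains_at t k) = card (boundaries_at t (k - 1)) * card (cycles_at t k)"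
proof -
  have "card (chains_at t k) = card (lin_D d eps ` chains_at t k) * card {S \<in> chains_at t k. lin_D d eps S = {}}"
    by (rule card_rank_nullity[OF xor_subspace_chains_at finite_chains_at]) (simp add: lin_D_xor_set finite_chain)
  then show ?thesis
    by (simp add: boundaries_def cycles_def)
qed

lemma chains_eq_if_sublevel_eq: "sublevel s = sublevel t \<Longrightarrow> chains n g (level h s) = chains n g (level h t)"
  by (simp add: fun_eq_iff chains_at_eq generators_def)

lemma chains_eq_top: "(\<And>i. i < n \<Longrightarrow> h i \<le> t) \<Longrightarrow> chains n g (\<lambda>_. True) = chains n g (level h t)"
  by (auto simp: fun_eq_iff chains_def level_def)

lemma transfer_xor_coset:
  assumes "s \<le> t"
  shows "transfer n g h d eps k t (xor_coset z (boundaries_at s k)) = xor_coset z (boundaries_at t k)"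
proof (intro set_eqI iffI)
  fix u assume "u \<in> transfer n g h d eps k t (xor_coset z (boundaries_at s k))"
  then obtain b1 b where b: "b1 \<in> boundaries_at s k" "b \<in> boundaries_at t k" "u = (z \<oplus> b1) \<oplus> b"
    unfolding transfer_def xor_coset_def by blast
  then have "b1 \<oplus> b \<in> boundaries_at t k"
    using boundaries_at_mono[OF assms] xor_subspace_boundaries_at unfolding xor_subspace_def by blast
  moreover have "u = z \<oplus> (b1 \<oplus> b)"
    using b(3) by (auto simp: xor_set_def)
  ultimately show "u \<in> xor_coset z (boundaries_at t k)"
    unfolding xor_coset_def by blast
next
  fix u assume "u \<in> xor_coset z (boundaries_at t k)"
  then obtain b where "b \<in> boundaries_at t k" "u = z \<oplus> b"
    by (auto simp: xor_coset_def)
  moreover have "z \<in> xor_coset z (boundaries_at s k)"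
    by (rule self_in_xor_coset[OF xor_subspace_boundaries_at])
  ultimately show "u \<in> transfer n g h d eps k t (xor_coset z (boundaries_at s k))"
    unfolding transfer_def by blast
qed

lemma transfer_in_homology_at:
  assumes "s \<le> t" "C \<in> homology_at s k"
  shows "transfer n g h d eps k t C \<in> homology_at t k"
proof -
  obtain z where "z \<in> cycles_at s k" "C = xor_coset z (boundaries_at s k)"
    using assms(2) by (rule homology_at_cases)
  moreover from this have "z \<in> cycles_at t k"
    using cycles_at_mono[OF assms(1)] by blast
  ultimately show ?thesis
    by (simp add: homology_at_eq transfer_xor_coset[OF assms(1)])
qed

lemma transfer_kernel_eq:
  assumes "s \<le> t" and "boundaries_at t k \<subseteq> cycles_at s k"
  shows "{C \<in> homology_at s k. transfer n g h d eps k t C = boundaries_at t k} =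
         (\<lambda>z. xor_coset z (boundaries_at s k)) ` boundaries_at t k"
proof -
  have trivial_iff: "xor_coset z (boundaries_at t k) = boundaries_at t k \<longleftrightarrow> z \<in> boundaries_at t k" for z
    using xor_coset_eq_iff[OF xor_subspace_boundaries_at, where z = z and z' = "{}"] by (simp add: xor_coset_empty)
  show ?thesis
  proof (intro set_eqI iffI)
    fix C assume "C \<in> {C \<in> homology_at s k. transfer n g h d eps k t C = boundaries_at t k}"
    then obtain z where "C = xor_coset z (boundaries_at s k)"
      "xor_coset z (boundaries_at t k) = boundaries_at t k"
      by (auto simp: homology_at_eq transfer_xor_coset[OF assms(1)])
    then show "C \<in> (\<lambda>z. xor_coset z (boundaries_at s k)) ` boundaries_at t k"
      by (simp add: trivial_iff)
  next
    fix C assume "C \<in> (\<lambda>z. xor_coset z (boundaries_at s k)) ` boundaries_at t k"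
    then obtain z where "z \<in> boundaries_at t k" "C = xor_coset z (boundaries_at s k)"
      by blast
    then show "C \<in> {C \<in> homology_at s k. transfer n g h d eps k t C = boundaries_at t k}"
      using assms(2) trivial_iff by (auto simp: homology_at_eq transfer_xor_coset[OF assms(1)])
  qed
qed

lemma card_transfer_kernel:
  assumes "s \<le> t" and "boundaries_at t k \<subseteq> cycles_at s k"
  shows "card {C \<in> homology_at s k. transfer n g h d eps k t C = boundaries_at t k} * card (boundaries_at s k) =
         card (boundaries_at t k)"
  unfolding transfer_kernel_eq[OF assms]
  by (rule card_xor_subspace_eq_cosets_mult[OF xor_subspace_boundaries_at finite_boundaries_at
        xor_subspace_boundaries_at boundaries_at_mono[OF assms(1)], symmetric])

lemma boundaries_subset_lower_cycles:
  assumes "\<And>i j. i \<in> sublevel t \<Longrightarrow> j < n \<Longrightarrow> h j < h i \<Longrightarrow> h j \<le> s"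
  shows "boundaries_at t k \<subseteq> cycles_at s k"
proof
  fix b assume b: "b \<in> boundaries_at t k"
  then obtain S where S: "S \<in> chains_at t (k + 1)" "b = lin_D d eps S"
    by (auto simp: boundaries_def)
  have "j \<in> generators s k" if j: "j \<in> b" for j
  proof -
    obtain i where "i \<in> S" "j \<in> generators t k" "h j < h i"
      using lin_D_below[OF S(1)] j S(2) by blast
    moreover from this have "i \<in> sublevel t"
      using S(1) by (auto simp: chains_at_eq generators_def)
    ultimately show ?thesis
      using assms by (auto simp: generators_def sublevel_def)
  qed
  moreover have "lin_D d eps b = {}"
    using b boundaries_subset_cycles by (auto simp: cycles_def)
  ultimately show "b \<in> cycles_at s k"
    by (auto simp: cycles_def chains_at_eq)
qed

text \<open>c is the largest height of a generator below t and s the next smaller one (or 0). Passing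
  c only adds generators of height c, and their boundaries lie strictly below c.\<close>
lemma previous_sublevel:
  assumes "sublevel t \<noteq> {}"
  obtains s c where "s < c" "c \<le> t" "sublevel s \<subset> sublevel t"
    "\<And>p. s \<le> p \<Longrightarrow> p < c \<Longrightarrow> sublevel p = sublevel s"
    "\<And>p. c \<le> p \<Longrightarrow> p \<le> t \<Longrightarrow> sublevel p = sublevel t"
    "\<And>k. boundaries_at t k \<subseteq> cycles_at s k"
proof -
  define c where "c = Max (h ` sublevel t)"
  have "c \<in> h ` sublevel t"
    unfolding c_def using assms by (intro Max_in) auto
  then obtain i0 where i0: "i0 \<in> sublevel t" "h i0 = c"
    by blast
  have below_c: "h i \<le> c" if "i \<in> sublevel t" for i
    using that unfolding c_def by simp
  have "c \<le> t" "0 < c"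
    using i0 height_pos by (auto simp: sublevel_def)
  define L where "L = {i. i < n \<and> h i < c}"
  define s where "s = (if L = {} then 0 else Max (h ` L))"
  have below_s: "h i \<le> s" if "i \<in> L" for i
    using that by (auto simp: s_def L_def)
  have "s < c"
    using Max_in[of "h ` L"] \<open>0 < c\<close> by (auto simp: s_def L_def)
  have sublevel_s: "sublevel p = L" if "s \<le> p" "p < c" for p
    using that below_s by (force simp: sublevel_def L_def)
  show ?thesis
  proof
    show "s < c" "c \<le> t"
      by fact+
    show "sublevel p = sublevel s" if "s \<le> p" "p < c" for p
      using sublevel_s that \<open>s < c\<close> by simp
    show "sublevel p = sublevel t" if "c \<le> p" "p \<le> t" for p
      using below_c that by (intro sublevel_eq_if_bounded) force+
    have "L \<subseteq> sublevel t" "i0 \<notin> L"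
      using \<open>c \<le> t\<close> i0 by (auto simp: L_def sublevel_def)
    then show "sublevel s \<subset> sublevel t"
      using sublevel_s[of s] \<open>s < c\<close> i0(1) by auto
    show "boundaries_at t k \<subseteq> cycles_at s k" for k
    proof (rule boundaries_subset_lower_cycles)
      fix i j assume "i \<in> sublevel t" "j < n" "h j < h i"
      then have "j \<in> L"
        using below_c[of i] by (simp add: L_def)
      then show "h j \<le> s"
        by (rule below_s)
    qed
  qed
qed

definition max_height :: real where
  "max_height = Max (insert 0 (h ` {..<n}))"

lemma height_le_max_height: "i < n \<Longrightarrow> h i \<le> max_height"
  by (simp add: max_height_def)

lemma sublevel_above_max_height: "max_height \<le> p \<Longrightarrow> sublevel p = sublevel max_height"
  using height_le_max_height by (force simp: sublevel_def)

lemma sublevel_nonpos: "p \<le> 0 \<Longrightarrow> sublevel p = {}"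
  using height_pos by (force simp: sublevel_def)

lemma chains_top: "chains n g (\<lambda>_. True) = chains n g (level h max_height)"
  by (rule chains_eq_top) (rule height_le_max_height)

lemma card_chains_top: "card (chains n g (\<lambda>_. True) k) = 2 ^ MC_coeff n g k"
proof -
  have "chains n g (\<lambda>_. True) k = Pow {i. i < n \<and> g i = k}"
    by (auto simp: chains_def)
  then show ?thesis
    by (simp add: MC_coeff_def card_Pow)
qed

lemma boundaries_top: "boundaries n g d eps (\<lambda>_. True) k = boundaries_at max_height k"
  by (simp add: boundaries_def chains_top)

lemma homology_top: "homology n g d eps (\<lambda>_. True) k = homology_at max_height k"
  by (simp add: homology_def boundaries_def cycles_def chains_top)

lemma card_chains_top_eq:
  "card (chains n g (\<lambda>_. True) k) =
     card (boundaries n g d eps (\<lambda>_. True) (k - 1)) * card (homology n g d eps (\<lambda>_. True) k)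
       * card (boundaries n g d eps (\<lambda>_. True) k)"
  using card_chains_at[of max_height k] card_cycles_at[of max_height k]
  by (simp add: chains_top boundaries_top homology_top)

lemma chains_at_subset_top: "chains_at t k \<subseteq> chains_at max_height k"
  using height_le_max_height by (auto simp: chains_at_eq generators_def sublevel_def)

lemma cycles_at_subset_top: "cycles_at t k \<subseteq> cycles_at max_height k"
  using chains_at_subset_top by (auto simp: cycles_def)

lemma boundaries_at_subset_top: "boundaries_at t k \<subseteq> boundaries_at max_height k"
  unfolding boundaries_def by (intro image_mono chains_at_subset_top)

lemma boundaries_at_first_height:
  assumes "b \<in> boundaries_at t k" "b \<noteq> {}"
  obtains s where "s \<in> h ` generators max_height (k + 1)" "s \<le> t" "b \<in> boundaries_at s k"
proof -
  obtain S where S: "S \<subseteq> generators t (k + 1)" "b = lin_D d eps S"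
    using assms(1) by (auto simp: boundaries_def chains_at_eq)
  have "S \<noteq> {}" "finite S"
    using S assms(2) finite_subset[OF S(1)] by auto
  define s where "s = Max (h ` S)"
  have "s \<in> h ` S"
    unfolding s_def using \<open>S \<noteq> {}\<close> \<open>finite S\<close> by (intro Max_in) auto
  then obtain i where i: "i \<in> S" "h i = s"
    by auto
  have "S \<subseteq> generators s (k + 1)"
    using S(1) \<open>finite S\<close> by (auto simp: generators_def sublevel_def s_def)
  then have "b \<in> boundaries_at s k"
    using S(2) by (auto simp: boundaries_def chains_at_eq)
  moreover have "s \<in> h ` generators max_height (k + 1)" "s \<le> t"
    using i S(1) height_le_max_height by (auto simp: generators_def sublevel_def)
  ultimately show ?thesis
    using that by blast
qed

end

section \<open>Counting with a barcode\<close>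

locale decomposed_homology = augmented_dga +
  fixes k :: int and J :: "nat set" and I :: "nat \<Rightarrow> real set"
    and \<phi> :: "real \<Rightarrow> nat set set \<Rightarrow> nat \<Rightarrow> bool"
  assumes decomposition: "interval_decomposition n g h d eps k J I \<phi>"
begin

definition alive :: "real \<Rightarrow> nat set" where
  "alive t = {j \<in> J. t \<in> I j}"

definition dead :: "real \<Rightarrow> nat set" where
  "dead t = {j \<in> J. (\<exists>p\<le>t. p \<in> I j) \<and> t \<notin> I j}"

lemma finite_J: "finite J"
  using decomposition by (simp add: interval_decomposition_def)

lemma finite_alive: "finite (alive t)"
  using finite_J by (simp add: alive_def)

lemma finite_dead: "finite (dead t)"
  using finite_J by (simp add: dead_def)

lemma real_interval_I: "j \<in> J \<Longrightarrow> real_interval (I j)"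
  using decomposition by (simp add: interval_decomposition_def)

lemma interval_I: "j \<in> J \<Longrightarrow> a \<in> I j \<Longrightarrow> b \<in> I j \<Longrightarrow> a \<le> x \<Longrightarrow> x \<le> b \<Longrightarrow> x \<in> I j"
  using real_interval_I unfolding real_interval_def by blast

lemma bij_\<phi>: "bij_betw (\<phi> t) (homology_at t k) (supported_on (alive t))"
proof -
  have "supported_on (alive t) = {f. \<forall>j. f j \<longrightarrow> j \<in> J \<and> t \<in> I j}"
    by (auto simp: supported_on_def alive_def)
  then show ?thesis
    using decomposition by (simp add: interval_decomposition_def)
qed

lemma \<phi>_cadd:
  "C1 \<in> homology_at t k \<Longrightarrow> C2 \<in> homology_at t k \<Longrightarrow> \<phi> t (cadd C1 C2) = (\<lambda>j. \<phi> t C1 j \<noteq> \<phi> t C2 j)"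
  using decomposition by (simp add: interval_decomposition_def)

lemma \<phi>_transfer:
  "s \<le> t \<Longrightarrow> C \<in> homology_at s k \<Longrightarrow> \<phi> t (transfer n g h d eps k t C) = (\<lambda>j. \<phi> s C j \<and> t \<in> I j)"
  using decomposition unfolding interval_decomposition_def by blast

lemma \<phi>_boundaries: "\<phi> t (boundaries_at t k) = (\<lambda>_. False)"
proof -
  have "cadd (boundaries_at t k) (boundaries_at t k) = boundaries_at t k"
    using cadd_xor_coset[OF xor_subspace_boundaries_at, of "{}" t k "{}"] by (simp add: xor_coset_empty)
  then show ?thesis
    using \<phi>_cadd[OF boundaries_in_homology_at boundaries_in_homology_at] by (metis (full_types))
qed

lemma card_homology_at: "card (homology_at t k) = 2 ^ card (alive t)"
  using bij_betw_same_card[OF bij_\<phi>] card_supported_on[OF finite_alive] by simp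

lemma card_transfer_kernel_alive:
  assumes "s \<le> t"
  shows "card {C \<in> homology_at s k. transfer n g h d eps k t C = boundaries_at t k} = 2 ^ card (alive s - alive t)"
proof -
  define K where "K = {C \<in> homology_at s k. transfer n g h d eps k t C = boundaries_at t k}"
  have K_iff: "C \<in> K \<longleftrightarrow> C \<in> homology_at s k \<and> (\<forall>j. \<phi> s C j \<longrightarrow> t \<notin> I j)" for C
  proof (cases "C \<in> homology_at s k")
    case True
    have "transfer n g h d eps k t C \<in> homology_at t k"
      by (rule transfer_in_homology_at[OF assms True])
    then have "transfer n g h d eps k t C = boundaries_at t k \<longleftrightarrow>
               \<phi> t (transfer n g h d eps k t C) = \<phi> t (boundaries_at t k)"
      using bij_\<phi>[of t] boundaries_in_homology_at by (auto simp: bij_betw_def inj_on_eq_iff)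
    then show ?thesis
      using True \<phi>_transfer[OF assms True] \<phi>_boundaries by (auto simp: K_def fun_eq_iff)
  qed (simp add: K_def)
  have "inj_on (\<phi> s) K"
    using bij_\<phi>[of s] K_iff by (auto simp: bij_betw_def intro: inj_on_subset)
  moreover have "\<phi> s ` K = supported_on (alive s - alive t)"
  proof (intro set_eqI iffI)
    fix f assume "f \<in> \<phi> s ` K"
    then show "f \<in> supported_on (alive s - alive t)"
      using K_iff bij_betwE[OF bij_\<phi>[of s]] by (force simp: supported_on_def alive_def)
  next
    fix f assume f: "f \<in> supported_on (alive s - alive t)"
    then have "f \<in> \<phi> s ` homology_at s k"
      using bij_betw_imp_surj_on[OF bij_\<phi>[of s]] by (auto simp: supported_on_def)
    then show "f \<in> \<phi> s ` K"
      using f K_iff by (auto simp: supported_on_def alive_def)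
  qed
  ultimately show ?thesis
    using card_image card_supported_on finite_alive by (metis K_def finite_Diff)
qed

lemma alive_eq_if_sublevel_eq_le:
  assumes "s \<le> t" "sublevel s = sublevel t"
  shows "alive s = alive t"
proof -
  have same: "homology_at s k = homology_at t k" "boundaries_at s k = boundaries_at t k"
    using chains_eq_if_sublevel_eq[OF assms(2)] by (simp_all add: homology_def boundaries_def cycles_def)
  then have "2 ^ card (alive s - alive t) * card (boundaries_at s k) = 1 * card (boundaries_at s k)"
    using card_transfer_kernel[OF assms(1), of k] card_transfer_kernel_alive[OF assms(1)]
      boundaries_subset_cycles[of s k] by simp
  moreover have "card (boundaries_at s k) \<noteq> 0"
    using finite_boundaries_at[of s k] xor_subspace_boundaries_at[of s k]
    by (auto simp: xor_subspace_def)
  ultimately have "card (alive s - alive t) = 0"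
    by simp
  then have "alive s \<subseteq> alive t"
    using finite_alive by auto
  moreover have "card (alive s) = card (alive t)"
    using card_homology_at[of s] card_homology_at[of t] same(1) by simp
  ultimately show ?thesis
    using finite_alive by (simp add: card_subset_eq)
qed

lemma alive_eq_if_sublevel_eq: "sublevel s = sublevel t \<Longrightarrow> alive s = alive t"
  by (metis alive_eq_if_sublevel_eq_le linear)

lemma alive_empty: "sublevel t = {} \<Longrightarrow> alive t = {}"
proof -
  assume "sublevel t = {}"
  then have "cycles_at t k = {{}}"
    by (auto simp: cycles_def chains_at_eq generators_def)
  then have "card (homology_at t k) = 1"
    by (simp add: homology_at_eq)
  then show ?thesis
    using card_homology_at[of t] finite_alive by simp
qed

lemma dead_Un_subset:
  assumes "s \<le> t"
  shows "dead s \<union> (alive s - alive t) \<subseteq> dead t"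
proof
  fix j assume "j \<in> dead s \<union> (alive s - alive t)"
  then show "j \<in> dead t"
  proof
    assume "j \<in> dead s"
    then obtain p where j: "j \<in> J" "p \<le> s" "p \<in> I j" "s \<notin> I j"
      by (auto simp: dead_def)
    moreover have "t \<notin> I j" "p \<le> t"
      using interval_I[of j p t s] j assms by auto
    ultimately show ?thesis
      by (auto simp: dead_def)
  next
    assume "j \<in> alive s - alive t"
    then show ?thesis
      using assms by (auto simp: dead_def alive_def intro!: exI[of _ s])
  qed
qed

lemma dead_step:
  assumes "s < c" "c \<le> t"
    and lower: "\<And>p. s \<le> p \<Longrightarrow> p < c \<Longrightarrow> alive p = alive s"
    and upper: "\<And>p. c \<le> p \<Longrightarrow> p \<le> t \<Longrightarrow> alive p = alive t"
  shows "dead t = dead s \<union> (alive s - alive t)"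
proof (intro set_eqI iffI)
  fix j assume "j \<in> dead t"
  then obtain p where j: "j \<in> J" "p \<le> t" "p \<in> I j" "t \<notin> I j"
    by (auto simp: dead_def)
  consider "p \<le> s" | "s < p" "p < c" | "c \<le> p"
    by linarith
  then show "j \<in> dead s \<union> (alive s - alive t)"
  proof cases
    case 1
    then show ?thesis
      using j by (auto simp: dead_def alive_def)
  next
    case 2
    then have "s \<in> I j"
      using lower[of p] j by (auto simp: alive_def)
    then show ?thesis
      using j by (auto simp: alive_def)
  next
    case 3
    then show ?thesis
      using upper[of p] j by (auto simp: alive_def)
  qed
next
  fix j assume "j \<in> dead s \<union> (alive s - alive t)"
  then show "j \<in> dead t"
    using dead_Un_subset[of s t] assms(1,2) by auto
qed

lemma dead_empty: "sublevel t = {} \<Longrightarrow> dead t = {}"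
proof (rule ccontr)
  assume "sublevel t = {}" "dead t \<noteq> {}"
  then obtain j p where "j \<in> J" "p \<le> t" "p \<in> I j"
    by (auto simp: dead_def)
  moreover from this have "sublevel p = {}"
    using sublevel_mono \<open>sublevel t = {}\<close> by blast
  ultimately show False
    using alive_empty by (auto simp: alive_def)
qed

text \<open>Induction over the critical heights: at each one the boundaries grow by the kernel of
  the transfer map, whose size is read off from the bars that end there.\<close>
lemma card_boundaries_at: "card (boundaries_at t k) = 2 ^ card (dead t)"
proof (induction "card (sublevel t)" arbitrary: t rule: less_induct)
  case less
  show ?case
  proof (cases "sublevel t = {}")
    case True
    then show ?thesis
      by (simp add: dead_empty boundaries_at_empty)
  next
    case False
    show ?thesis
    proof (rule previous_sublevel[OF False])
      fix s c assume sc: "s < c" "c \<le> t" "sublevel s \<subset> sublevel t"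
        "\<And>p. s \<le> p \<Longrightarrow> p < c \<Longrightarrow> sublevel p = sublevel s"
        "\<And>p. c \<le> p \<Longrightarrow> p \<le> t \<Longrightarrow> sublevel p = sublevel t"
        "\<And>k. boundaries_at t k \<subseteq> cycles_at s k"
      have "s \<le> t"
        using sc(1,2) by simp
      have "dead t = dead s \<union> (alive s - alive t)"
      proof (rule dead_step[OF sc(1,2)])
        show "alive p = alive s" if "s \<le> p" "p < c" for p
          using that by (intro alive_eq_if_sublevel_eq sc(4))
        show "alive p = alive t" if "c \<le> p" "p \<le> t" for p
          using that by (intro alive_eq_if_sublevel_eq sc(5))
      qed
      moreover have "dead s \<inter> (alive s - alive t) = {}"
        by (auto simp: dead_def alive_def)
      ultimately have "card (dead t) = card (dead s) + card (alive s - alive t)"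
        using finite_dead finite_alive by (simp add: card_Un_disjoint)
      moreover have "card (boundaries_at s k) = 2 ^ card (dead s)"
        by (rule less.hyps[OF psubset_card_mono[OF finite_sublevel sc(3)]])
      ultimately show ?thesis
        using card_transfer_kernel[OF \<open>s \<le> t\<close> sc(6)[of k]] card_transfer_kernel_alive[OF \<open>s \<le> t\<close>]
        by (simp add: power_add mult.commute)
    qed
  qed
qed

lemma in_I_above_max_height: "j \<in> J \<Longrightarrow> max_height \<le> p \<Longrightarrow> p \<in> I j \<longleftrightarrow> max_height \<in> I j"
  using alive_eq_if_sublevel_eq[OF sublevel_above_max_height, of p] by (auto simp: alive_def)

lemma not_in_I_nonpos: "j \<in> J \<Longrightarrow> p \<le> 0 \<Longrightarrow> p \<notin> I j"
  using alive_empty[OF sublevel_nonpos, of p] by (auto simp: alive_def)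

lemma finite_bars_eq_card_dead: "finite_bars J I = card (dead max_height)"
proof -
  have "{j \<in> J. \<exists>a b. I j \<subseteq> {a..b}} = dead max_height"
  proof (intro set_eqI iffI)
    fix j assume "j \<in> {j \<in> J. \<exists>a b. I j \<subseteq> {a..b}}"
    then obtain a b where j: "j \<in> J" "I j \<subseteq> {a..b}"
      by blast
    obtain p where p: "p \<in> I j"
      using real_interval_I[OF j(1)] unfolding real_interval_def by blast
    have "max_height \<notin> I j"
    proof
      assume "max_height \<in> I j"
      then have "max max_height (b + 1) \<in> I j"
        using in_I_above_max_height[OF j(1), of "max max_height (b + 1)"] by simp
      then show False
        using j(2) by (auto simp: subset_iff)
    qed
    moreover have "p \<le> max_height"
      using in_I_above_max_height[OF j(1), of p] p \<open>max_height \<notin> I j\<close> by (meson linear)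
    ultimately show "j \<in> dead max_height"
      using j(1) p by (auto simp: dead_def)
  next
    fix j assume "j \<in> dead max_height"
    then have j: "j \<in> J" "max_height \<notin> I j"
      by (auto simp: dead_def)
    have "I j \<subseteq> {0..max_height}"
    proof
      fix q assume "q \<in> I j"
      then show "q \<in> {0..max_height}"
        using in_I_above_max_height[OF j(1), of q] not_in_I_nonpos[OF j(1), of q] j(2) by force
    qed
    then show "j \<in> {j \<in> J. \<exists>a b. I j \<subseteq> {a..b}}"
      using j(1) by blast
  qed
  then show ?thesis
    by (simp add: finite_bars_def)
qed

lemma card_boundaries_top: "card (boundaries n g d eps (\<lambda>_. True) k) = 2 ^ finite_bars J I"
  by (simp add: boundaries_top card_boundaries_at finite_bars_eq_card_dead)

lemma card_homology_top: "card (homology n g d eps (\<lambda>_. True) k) = 2 ^ PC_coeff n g d eps k"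
proof -
  have "PC_coeff n g d eps k = card (alive max_height)"
    unfolding PC_coeff_def homology_top
    by (rule hom_dim_eq_card[OF finite_alive bij_\<phi>]) (simp add: \<phi>_cadd)
  then show ?thesis
    by (simp add: homology_top card_homology_at)
qed

end

section \<open>Existence of barcodes\<close>

locale pivot_pairing = augmented_dga +
  fixes k :: int
begin

definition key :: "nat \<Rightarrow> real \<times> nat" where
  "key i = (h i, i)"

sublocale pivot_order key
  by unfold_locales (simp add: inj_def key_def)

lemma key_le_imp_height_le: "key i \<le> key j \<Longrightarrow> h i \<le> h j"
  by (auto simp: key_def less_eq_prod_def)

abbreviation "all_cycles \<equiv> cycles_at max_height k"
abbreviation "all_boundaries \<equiv> boundaries_at max_height k"

definition cycle_pivots :: "nat set" where
  "cycle_pivots = {pivot z | z. z \<in> all_cycles \<and> z \<noteq> {}}"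

definition boundary_pivots :: "nat set" where
  "boundary_pivots = {pivot b | b. b \<in> all_boundaries \<and> b \<noteq> {}}"

definition death :: "nat \<Rightarrow> real" where
  "death \<tau> = Min {s \<in> h ` generators max_height (k + 1). \<exists>b\<in>boundaries_at s k. b \<noteq> {} \<and> pivot b = \<tau>}"

text \<open>A pivot of a boundary gets a boundary with that pivot from the earliest level where one
  exists; this is what makes every level of boundaries spanned by basis vectors.\<close>
definition basis :: "nat \<Rightarrow> nat set" where
  "basis \<tau> = (if \<tau> \<in> boundary_pivots
     then SOME b. b \<in> boundaries_at (death \<tau>) k \<and> b \<noteq> {} \<and> pivot b = \<tau>
     else SOME z. z \<in> all_cycles \<and> z \<noteq> {} \<and> pivot z = \<tau>)"

lemma all_cycles_subset: "z \<in> all_cycles \<Longrightarrow> z \<subseteq> generators max_height k"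
  by (simp add: cycles_def chains_at_eq)

lemma finite_all_cycles_elem: "z \<in> all_cycles \<Longrightarrow> finite z"
  using all_cycles_subset finite_generators finite_subset by blast

lemma cycle_pivots_subset: "cycle_pivots \<subseteq> generators max_height k"
  using all_cycles_subset pivot_in finite_all_cycles_elem by (force simp: cycle_pivots_def)

lemma finite_cycle_pivots: "finite cycle_pivots"
  using cycle_pivots_subset finite_generators by (rule finite_subset)

lemma boundary_pivots_subset: "boundary_pivots \<subseteq> cycle_pivots"
  using boundaries_subset_cycles by (force simp: boundary_pivots_def cycle_pivots_def)

lemma death_attained:
  assumes "\<tau> \<in> boundary_pivots"
  shows "\<exists>b\<in>boundaries_at (death \<tau>) k. b \<noteq> {} \<and> pivot b = \<tau>"
proof -
  obtain b where b: "b \<in> all_boundaries" "b \<noteq> {}" "pivot b = \<tau>"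
    using assms by (auto simp: boundary_pivots_def)
  obtain s where "s \<in> h ` generators max_height (k + 1)" "s \<le> max_height" "b \<in> boundaries_at s k"
    using b(1,2) by (rule boundaries_at_first_height)
  then have "death \<tau> \<in> {s \<in> h ` generators max_height (k + 1). \<exists>b\<in>boundaries_at s k. b \<noteq> {} \<and> pivot b = \<tau>}"
    unfolding death_def using b by (intro Min_in) auto
  then show ?thesis
    by blast
qed

lemma death_le:
  assumes "b \<in> boundaries_at t k" "b \<noteq> {}"
  shows "pivot b \<in> boundary_pivots" "death (pivot b) \<le> t"
proof -
  show "pivot b \<in> boundary_pivots"
    using assms boundaries_at_subset_top by (auto simp: boundary_pivots_def)
  obtain s where "s \<in> h ` generators max_height (k + 1)" "s \<le> t" "b \<in> boundaries_at s k"
    using assms by (rule boundaries_at_first_height)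
  moreover from this have "death (pivot b) \<le> s"
    unfolding death_def using assms(2) by (intro Min_le) auto
  ultimately show "death (pivot b) \<le> t"
    by simp
qed

lemma basis_boundary:
  assumes "\<tau> \<in> boundary_pivots"
  shows "basis \<tau> \<in> boundaries_at (death \<tau>) k" "basis \<tau> \<noteq> {}" "pivot (basis \<tau>) = \<tau>"
  using someI_ex[OF death_attained[OF assms, unfolded Bex_def]] assms by (simp_all add: basis_def)

lemma basis_cycle:
  assumes "\<tau> \<in> cycle_pivots"
  shows "basis \<tau> \<in> all_cycles" "basis \<tau> \<noteq> {}" "pivot (basis \<tau>) = \<tau>"
proof -
  have "\<exists>z. z \<in> all_cycles \<and> z \<noteq> {} \<and> pivot z = \<tau>"
    using assms by (auto simp: cycle_pivots_def)
  then have "basis \<tau> \<in> all_cycles \<and> basis \<tau> \<noteq> {} \<and> pivot (basis \<tau>) = \<tau>" if "\<tau> \<notin> boundary_pivots"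
    using that by (simp add: basis_def) (rule someI_ex)
  moreover have "basis \<tau> \<in> all_cycles" if "\<tau> \<in> boundary_pivots"
    using basis_boundary(1)[OF that] boundaries_at_subset_top boundaries_subset_cycles by blast
  ultimately show "basis \<tau> \<in> all_cycles" "basis \<tau> \<noteq> {}" "pivot (basis \<tau>) = \<tau>"
    using basis_boundary(2,3) by auto
qed

lemma echelon_basis: "echelon basis cycle_pivots"
  using basis_cycle finite_all_cycles_elem by (simp add: echelon_def)

lemma height_less_death:
  assumes "\<tau> \<in> boundary_pivots"
  shows "h \<tau> < death \<tau>"
proof -
  note b = basis_boundary[OF assms]
  obtain S where S: "S \<in> chains_at (death \<tau>) (k + 1)" "basis \<tau> = lin_D d eps S"
    using b(1) by (auto simp: boundaries_def)
  have "\<tau> \<in> basis \<tau>"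
    using b boundaries_at_subset_top boundaries_subset_cycles pivot_in finite_all_cycles_elem
    by (metis subsetD)
  then obtain i where "i \<in> S" "h \<tau> < h i"
    using lin_D_below[OF S(1)] S(2) by metis
  then show ?thesis
    using S(1) by (force simp: chains_at_eq generators_def sublevel_def)
qed

definition coords :: "nat set \<Rightarrow> nat set" where
  "coords z = (THE S. S \<subseteq> cycle_pivots \<and> xor_sum basis S = z)"

lemma xor_sum_basis_inj:
  "S1 \<subseteq> cycle_pivots \<Longrightarrow> S2 \<subseteq> cycle_pivots \<Longrightarrow> xor_sum basis S1 = xor_sum basis S2 \<Longrightarrow> S1 = S2"
  using xor_sum_echelon_inj echelon_subset[OF echelon_basis] finite_cycle_pivots
  by (meson Un_least finite_subset)

lemma coords_xor_sum: "S \<subseteq> cycle_pivots \<Longrightarrow> coords (xor_sum basis S) = S"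
  unfolding coords_def by (rule the_equality) (auto dest: xor_sum_basis_inj)

lemma basis_spans:
  assumes "xor_subspace W" "W \<subseteq> all_cycles"
    and "\<And>z. z \<in> W \<Longrightarrow> z \<noteq> {} \<Longrightarrow> pivot z \<in> P" "P \<subseteq> cycle_pivots" "\<And>\<tau>. \<tau> \<in> P \<Longrightarrow> basis \<tau> \<in> W"
    and "z \<in> W"
  shows "coords z \<subseteq> P" "xor_sum basis (coords z) = z" "\<And>\<tau>. \<tau> \<in> coords z \<Longrightarrow> \<exists>j\<in>z. key \<tau> \<le> key j"
proof -
  obtain S where "S \<subseteq> P" "xor_sum basis S = z" "\<forall>\<tau>\<in>S. \<exists>j\<in>z. key \<tau> \<le> key j"
    using echelon_spans[OF finite_generators assms(1) _ assms(3) echelon_subset[OF echelon_basis assms(4)] assms(5,6)]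
      assms(2) all_cycles_subset by blast
  moreover from this have "coords z = S"
    using coords_xor_sum assms(4) by blast
  ultimately show "coords z \<subseteq> P" "xor_sum basis (coords z) = z" "\<And>\<tau>. \<tau> \<in> coords z \<Longrightarrow> \<exists>j\<in>z. key \<tau> \<le> key j"
    by auto
qed

lemma coords_cycle:
  assumes "z \<in> all_cycles"
  shows "coords z \<subseteq> cycle_pivots" "xor_sum basis (coords z) = z"
    "\<And>\<tau>. \<tau> \<in> coords z \<Longrightarrow> \<exists>j\<in>z. key \<tau> \<le> key j"
proof -
  have "pivot z' \<in> cycle_pivots" if "z' \<in> all_cycles" "z' \<noteq> {}" for z'
    using that by (auto simp: cycle_pivots_def)
  then show "coords z \<subseteq> cycle_pivots" "xor_sum basis (coords z) = z"
    "\<And>\<tau>. \<tau> \<in> coords z \<Longrightarrow> \<exists>j\<in>z. key \<tau> \<le> key j"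
    using basis_spans[OF xor_subspace_cycles_at order_refl _ order_refl basis_cycle(1) assms] by blast+
qed

lemma coords_xor_set:
  assumes "x \<in> all_cycles" "y \<in> all_cycles"
  shows "coords (x \<oplus> y) = coords x \<oplus> coords y"
proof -
  have "finite (coords x)" "finite (coords y)"
    using coords_cycle(1) assms finite_subset[OF _ finite_cycle_pivots] by blast+
  then have "xor_sum basis (coords x \<oplus> coords y) = x \<oplus> y"
    using coords_cycle(2) assms by (simp add: xor_sum_xor_set)
  moreover have "coords x \<oplus> coords y \<subseteq> cycle_pivots"
    using coords_cycle(1)[OF assms(1)] coords_cycle(1)[OF assms(2)] xor_set_subset_Un[of "coords x" "coords y"]
    by blast
  ultimately show ?thesis
    using coords_xor_sum by metis
qed

lemma cycles_at_iff: "z \<in> cycles_at t k \<longleftrightarrow> z \<in> all_cycles \<and> (\<forall>\<tau>\<in>coords z. h \<tau> \<le> t)"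
proof
  assume z: "z \<in> cycles_at t k"
  then have "z \<in> all_cycles"
    using cycles_at_subset_top by blast
  moreover have "h \<tau> \<le> t" if \<tau>: "\<tau> \<in> coords z" for \<tau>
  proof -
    obtain j where "j \<in> z" "key \<tau> \<le> key j"
      using coords_cycle(3)[OF \<open>z \<in> all_cycles\<close> \<tau>] by blast
    then show ?thesis
      using z key_le_imp_height_le by (force simp: cycles_def chains_at_eq generators_def sublevel_def)
  qed
  ultimately show "z \<in> all_cycles \<and> (\<forall>\<tau>\<in>coords z. h \<tau> \<le> t)"
    by blast
next
  assume z: "z \<in> all_cycles \<and> (\<forall>\<tau>\<in>coords z. h \<tau> \<le> t)"
  have "h j \<le> t" if j: "j \<in> z" for j
  proof -
    obtain \<tau> where \<tau>: "\<tau> \<in> coords z" "j \<in> basis \<tau>"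
      using j xor_sum_subset_UN[of basis "coords z"] coords_cycle(2)[of z] z by auto
    have "\<tau> \<in> cycle_pivots"
      using \<tau>(1) coords_cycle(1) z by blast
    then have "key j \<le> key \<tau>"
      using key_le_pivot[of "basis \<tau>" j] \<tau>(2) echelon_basis by (auto simp: echelon_def)
    then show ?thesis
      using key_le_imp_height_le z \<tau>(1) by force
  qed
  then show "z \<in> cycles_at t k"
    using z by (auto simp: cycles_def chains_at_eq generators_def sublevel_def)
qed

lemma boundaries_at_iff:
  "z \<in> boundaries_at t k \<longleftrightarrow> z \<in> all_cycles \<and> (\<forall>\<tau>\<in>coords z. \<tau> \<in> boundary_pivots \<and> death \<tau> \<le> t)"
proof
  assume z: "z \<in> boundaries_at t k"
  have "z \<in> all_cycles"
    using z boundaries_at_subset_top boundaries_subset_cycles by blast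
  moreover have "coords z \<subseteq> {\<tau> \<in> boundary_pivots. death \<tau> \<le> t}"
  proof (rule basis_spans(1)[OF xor_subspace_boundaries_at _ _ _ _ z])
    show "boundaries_at t k \<subseteq> all_cycles"
      using boundaries_at_subset_top boundaries_subset_cycles by blast
    show "pivot b \<in> {\<tau> \<in> boundary_pivots. death \<tau> \<le> t}" if "b \<in> boundaries_at t k" "b \<noteq> {}" for b
      using death_le[OF that] by simp
    show "{\<tau> \<in> boundary_pivots. death \<tau> \<le> t} \<subseteq> cycle_pivots"
      using boundary_pivots_subset by blast
    show "basis \<tau> \<in> boundaries_at t k" if "\<tau> \<in> {\<tau> \<in> boundary_pivots. death \<tau> \<le> t}" for \<tau>
      using basis_boundary(1) boundaries_at_mono that by blast
  qed
  ultimately show "z \<in> all_cycles \<and> (\<forall>\<tau>\<in>coords z. \<tau> \<in> boundary_pivots \<and> death \<tau> \<le> t)"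
    by blast
next
  assume z: "z \<in> all_cycles \<and> (\<forall>\<tau>\<in>coords z. \<tau> \<in> boundary_pivots \<and> death \<tau> \<le> t)"
  have "xor_sum basis (coords z) \<in> boundaries_at t k"
  proof (rule xor_sum_in_subspace[OF xor_subspace_boundaries_at])
    show "finite (coords z)"
      using coords_cycle(1) z finite_cycle_pivots finite_subset by blast
    show "basis \<tau> \<in> boundaries_at t k" if "\<tau> \<in> coords z" for \<tau>
      using basis_boundary(1) boundaries_at_mono z that by blast
  qed
  then show "z \<in> boundaries_at t k"
    using coords_cycle(2) z by simp
qed

definition bar :: "nat \<Rightarrow> real set" where
  "bar \<tau> = {x. h \<tau> \<le> x \<and> (\<tau> \<in> boundary_pivots \<longrightarrow> x < death \<tau>)}"

definition bar_coords :: "real \<Rightarrow> nat set set \<Rightarrow> nat \<Rightarrow> bool" where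
  "bar_coords t C \<tau> \<longleftrightarrow> t \<in> bar \<tau> \<and> (\<exists>z\<in>C. \<tau> \<in> coords z)"

lemma bar_coords_xor_coset:
  assumes z: "z \<in> cycles_at t k"
  shows "bar_coords t (xor_coset z (boundaries_at t k)) = (\<lambda>\<tau>. t \<in> bar \<tau> \<and> \<tau> \<in> coords z)"
proof (intro ext iffI)
  fix \<tau> assume "bar_coords t (xor_coset z (boundaries_at t k)) \<tau>"
  then obtain b where "t \<in> bar \<tau>" "b \<in> boundaries_at t k" "\<tau> \<in> coords (z \<oplus> b)"
    by (auto simp: bar_coords_def xor_coset_def)
  moreover have "\<tau> \<notin> coords b"
  proof
    assume "\<tau> \<in> coords b"
    then have "\<tau> \<in> boundary_pivots" "death \<tau> \<le> t"
      using \<open>b \<in> boundaries_at t k\<close> boundaries_at_iff by blast+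
    then show False
      using \<open>t \<in> bar \<tau>\<close> by (simp add: bar_def)
  qed
  moreover have "z \<in> all_cycles" "b \<in> all_cycles"
    using z \<open>b \<in> boundaries_at t k\<close> cycles_at_subset_top boundaries_at_subset_top
      boundaries_subset_cycles by blast+
  ultimately show "t \<in> bar \<tau> \<and> \<tau> \<in> coords z"
    by (simp add: coords_xor_set xor_set_iff)
next
  fix \<tau> assume "t \<in> bar \<tau> \<and> \<tau> \<in> coords z"
  then show "bar_coords t (xor_coset z (boundaries_at t k)) \<tau>"
    using self_in_xor_coset[OF xor_subspace_boundaries_at] by (auto simp: bar_coords_def)
qed

lemma inj_on_bar_coords: "inj_on (bar_coords t) (homology_at t k)"
proof (rule inj_onI)
  fix C1 C2 assume C1: "C1 \<in> homology_at t k" and C2: "C2 \<in> homology_at t k"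
    and eq: "bar_coords t C1 = bar_coords t C2"
  obtain z1 z2 where z: "z1 \<in> cycles_at t k" "C1 = xor_coset z1 (boundaries_at t k)"
    "z2 \<in> cycles_at t k" "C2 = xor_coset z2 (boundaries_at t k)"
    using C1 C2 by (metis homology_at_cases)
  have "z1 \<oplus> z2 \<in> cycles_at t k"
    using z xor_subspace_cycles_at unfolding xor_subspace_def by blast
  moreover have "\<tau> \<in> boundary_pivots \<and> death \<tau> \<le> t" if "\<tau> \<in> coords (z1 \<oplus> z2)" for \<tau>
  proof -
    have "z1 \<in> all_cycles" "z2 \<in> all_cycles"
      using z cycles_at_subset_top by blast+
    then have "t \<notin> bar \<tau>"
      using that eq z bar_coords_xor_coset[of z1 t] bar_coords_xor_coset[of z2 t]
      by (auto simp: coords_xor_set xor_set_iff fun_eq_iff)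
    moreover have "h \<tau> \<le> t"
      using that \<open>z1 \<oplus> z2 \<in> cycles_at t k\<close> cycles_at_iff by blast
    ultimately show ?thesis
      by (auto simp: bar_def)
  qed
  ultimately have "z1 \<oplus> z2 \<in> boundaries_at t k"
    using boundaries_at_iff cycles_at_subset_top by blast
  then show "C1 = C2"
    using z xor_coset_eq_iff[OF xor_subspace_boundaries_at] by simp
qed

lemma bar_coords_image: "bar_coords t ` homology_at t k = {f. \<forall>\<tau>. f \<tau> \<longrightarrow> \<tau> \<in> cycle_pivots \<and> t \<in> bar \<tau>}"
proof (intro set_eqI iffI)
  fix f assume "f \<in> bar_coords t ` homology_at t k"
  then obtain z where z: "z \<in> cycles_at t k" "f = bar_coords t (xor_coset z (boundaries_at t k))"
    by (auto simp: homology_at_eq)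
  then have "coords z \<subseteq> cycle_pivots"
    using coords_cycle(1) cycles_at_subset_top by blast
  then show "f \<in> {f. \<forall>\<tau>. f \<tau> \<longrightarrow> \<tau> \<in> cycle_pivots \<and> t \<in> bar \<tau>}"
    using z by (auto simp: bar_coords_xor_coset)
next
  fix f assume f: "f \<in> {f. \<forall>\<tau>. f \<tau> \<longrightarrow> \<tau> \<in> cycle_pivots \<and> t \<in> bar \<tau>}"
  define z where "z = xor_sum basis {\<tau>. f \<tau>}"
  have S: "{\<tau>. f \<tau>} \<subseteq> cycle_pivots"
    using f by blast
  then have "z \<in> all_cycles"
    unfolding z_def using basis_cycle(1) finite_subset[OF S finite_cycle_pivots]
    by (intro xor_sum_in_subspace[OF xor_subspace_cycles_at]) auto
  moreover have "coords z = {\<tau>. f \<tau>}"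
    unfolding z_def using S by (rule coords_xor_sum)
  moreover have "\<forall>\<tau>\<in>coords z. h \<tau> \<le> t"
    using f \<open>coords z = {\<tau>. f \<tau>}\<close> by (auto simp: bar_def)
  ultimately have "z \<in> cycles_at t k"
    using cycles_at_iff by blast
  moreover have "bar_coords t (xor_coset z (boundaries_at t k)) = f"
    using bar_coords_xor_coset[OF \<open>z \<in> cycles_at t k\<close>] \<open>coords z = {\<tau>. f \<tau>}\<close> f by auto
  ultimately show "f \<in> bar_coords t ` homology_at t k"
    by (auto simp: homology_at_eq)
qed

lemma bar_coords_cadd:
  assumes "C1 \<in> homology_at t k" "C2 \<in> homology_at t k"
  shows "bar_coords t (cadd C1 C2) = (\<lambda>\<tau>. bar_coords t C1 \<tau> \<noteq> bar_coords t C2 \<tau>)"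
proof -
  obtain z1 z2 where z: "z1 \<in> cycles_at t k" "C1 = xor_coset z1 (boundaries_at t k)"
    "z2 \<in> cycles_at t k" "C2 = xor_coset z2 (boundaries_at t k)"
    using assms by (metis homology_at_cases)
  moreover have "z1 \<oplus> z2 \<in> cycles_at t k"
    using z xor_subspace_cycles_at unfolding xor_subspace_def by blast
  moreover have "coords (z1 \<oplus> z2) = coords z1 \<oplus> coords z2"
    using z cycles_at_subset_top coords_xor_set by blast
  ultimately show ?thesis
    by (auto simp: cadd_xor_coset[OF xor_subspace_boundaries_at] bar_coords_xor_coset xor_set_iff fun_eq_iff)
qed

lemma bar_coords_transfer:
  assumes "s \<le> t" "C \<in> homology_at s k"
  shows "bar_coords t (transfer n g h d eps k t C) = (\<lambda>\<tau>. bar_coords s C \<tau> \<and> t \<in> bar \<tau>)"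
proof -
  obtain z where z: "z \<in> cycles_at s k" "C = xor_coset z (boundaries_at s k)"
    using assms(2) by (rule homology_at_cases)
  have "s \<in> bar \<tau>" if "\<tau> \<in> coords z" "t \<in> bar \<tau>" for \<tau>
  proof -
    have "h \<tau> \<le> s"
      using cycles_at_iff z(1) that(1) by blast
    then show ?thesis
      using that(2) assms(1) by (auto simp: bar_def)
  qed
  moreover have "z \<in> cycles_at t k"
    using z(1) cycles_at_mono[OF assms(1)] by blast
  ultimately show ?thesis
    using z by (auto simp: transfer_xor_coset[OF assms(1)] bar_coords_xor_coset fun_eq_iff)
qed

lemma real_interval_bar: "\<tau> \<in> cycle_pivots \<Longrightarrow> real_interval (bar \<tau>)"
  using height_less_death by (fastforce simp: real_interval_def bar_def)

lemma interval_decomposition_bars: "interval_decomposition n g h d eps k cycle_pivots bar bar_coords"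
  unfolding interval_decomposition_def
  using finite_cycle_pivots real_interval_bar inj_on_bar_coords bar_coords_image
    bar_coords_cadd bar_coords_transfer
  by (simp add: bij_betw_def)

end

lemma (in augmented_dga) MC_coeff_eq:
  assumes "interval_decomposition n g h d eps (k - 1) J' I' \<phi>'"
    and "interval_decomposition n g h d eps k J I \<phi>"
  shows "MC_coeff n g k = finite_bars J' I' + PC_coeff n g d eps k + finite_bars J I"
proof -
  interpret lower: decomposed_homology n g h d eps "k - 1" J' I' \<phi>'
    by (rule decomposed_homology.intro[OF augmented_dga_axioms decomposed_homology_axioms.intro[OF assms(1)]])
  interpret upper: decomposed_homology n g h d eps k J I \<phi>
    by (rule decomposed_homology.intro[OF augmented_dga_axioms decomposed_homology_axioms.intro[OF assms(2)]])
  have "(2::nat) ^ MC_coeff n g k = 2 ^ finite_bars J' I' * 2 ^ PC_coeff n g d eps k * 2 ^ finite_bars J I"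
    using card_chains_top[of k] card_chains_top_eq[of k] lower.card_boundaries_top upper.card_homology_top
      upper.card_boundaries_top by simp
  then show ?thesis
    by (simp flip: power_add)
qed

theorem theorem6p1:
  fixes n :: nat and g :: "nat \<Rightarrow> int" and h :: "nat \<Rightarrow> real"
    and d :: "nat \<Rightarrow> nat list set" and eps :: "nat \<Rightarrow> bool"
  assumes "CE_dga n g h d"
    and "augmentation n g d eps"
  shows "(\<forall>k. \<exists>(J :: nat set) I \<phi>. interval_decomposition n g h d eps k J I \<phi>) \<and>
         (\<forall>J I \<phi>. (\<forall>k. interval_decomposition n g h d eps k (J k) (I k) (\<phi> k)) \<longrightarrow>
            (\<forall>k. int (MC_coeff n g k) - int (PC_coeff n g d eps k)
                 = int (finite_bars (J (k - 1)) (I (k - 1))) + int (finite_bars (J k) (I k))))"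
proof -
  interpret augmented_dga n g h d eps
    using assms by (rule augmented_dga.intro)
  have "\<exists>(J :: nat set) I \<phi>. interval_decomposition n g h d eps k J I \<phi>" for k
  proof -
    interpret pivot_pairing n g h d eps k ..
    show ?thesis
      using interval_decomposition_bars by blast
  qed
  moreover have "int (MC_coeff n g k) - int (PC_coeff n g d eps k)
      = int (finite_bars (J (k - 1)) (I (k - 1))) + int (finite_bars (J k) (I k))"
    if "\<forall>k. interval_decomposition n g h d eps k (J k) (I k) (\<phi> k)" for J I \<phi> k
    using MC_coeff_eq[of k "J (k - 1)" "I (k - 1)" "\<phi> (k - 1)" "J k" "I k" "\<phi> k"] that by simp
  ultimately show ?thesis
    by blast
qed

end
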